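(* Let $\Gamma$ be a standard graph with minimal edge length $L_{\min}$. Let $f$ be a generic eigenfunction with eigenvalue $k^2$, where $k>\pi/L_{\min}$, and let $\Omega$ be a Neumann domain of $f$. Then (1) $\Omega$ is either a star graph or an interval; (2) $f|_\Omega$ is a generic eigenfunction of $\Omega$, considered as a standard graph; (3) $N(\Omega)=\phi(f|_\Omega)$.
   Context: A standard graph is a connected metric graph with finitely many vertices and edges, no degree-two vertices, edges $[0,l_e]$, with Laplacian $-d^2/dx^2$ and Neumann (Kirchhoff) vertex conditions (continuity, vanishing sum of outgoing derivatives). $\partial\Gamma$ = degree-one vertices. An eigenfunction is generic if its eigenvalue is simple, it is nonzero at every vertex, and its outgoing derivatives at every vertex not in $\partial\Gamma$ are nonzero. Neumann points of $f$ are points in edge interiors where $f'=0$; Neumann domains are the closures of connected components of $\Gamma$ minus Neumann points, regarded as metric graphs (with the Neumann points as boundary vertices) and as standard graphs. $N(\Omega):=|\{0\le\lambda<k^2:\lambda\text{ eigenvalue of }\Omega\}|$ with multiplicity. The nodal count $\phi(g)$ of an eigenfunction $g$ is the number of points in edge interiors where $g=0$. *)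

theory Defs
  imports "HOL-Analysis.Analysis"
begin

text \<open>A metric graph: finite vertex set, finite edge set, each edge e is the interval
 [0, len e] whose end 0 is attached to fst (ends e) and whose end len e is attached to
 snd (ends e).\<close>

record ('v, 'e) mgraph =
  verts :: "'v set"
  edges :: "'e set"
  ends  :: "'e \<Rightarrow> 'v \<times> 'v"
  len   :: "'e \<Rightarrow> real"

text \<open>Edge ends: (e, False) is the end at 0, (e, True) the end at len e.\<close>
definition endpt :: "('v,'e) mgraph \<Rightarrow> 'e \<Rightarrow> bool \<Rightarrow> 'v" where
  "endpt G e b = (if b then snd (ends G e) else fst (ends G e))"

definition ends_at :: "('v,'e) mgraph \<Rightarrow> 'v \<Rightarrow> ('e \<times> bool) set" where
  "ends_at G v = {(e, b). e \<in> edges G \<and> endpt G e b = v}"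

definition deg :: "('v,'e) mgraph \<Rightarrow> 'v \<Rightarrow> nat" where
  "deg G v = card (ends_at G v)"

definition boundary :: "('v,'e) mgraph \<Rightarrow> 'v set" where
  "boundary G = {v \<in> verts G. deg G v = 1}"

definition wf_graph :: "('v,'e) mgraph \<Rightarrow> bool" where
  "wf_graph G \<longleftrightarrow> finite (verts G) \<and> finite (edges G) \<and>
     (\<forall>e\<in>edges G. fst (ends G e) \<in> verts G \<and> snd (ends G e) \<in> verts G \<and> len G e > 0)"

definition vadj :: "('v,'e) mgraph \<Rightarrow> ('v \<times> 'v) set" where
  "vadj G = {(fst (ends G e), snd (ends G e)) | e. e \<in> edges G}
          \<union> {(snd (ends G e), fst (ends G e)) | e. e \<in> edges G}"

definition connected_graph :: "('v,'e) mgraph \<Rightarrow> bool" where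
  "connected_graph G \<longleftrightarrow> verts G \<noteq> {} \<and> (\<forall>u\<in>verts G. \<forall>w\<in>verts G. (u, w) \<in> (vadj G)\<^sup>*)"

text \<open>Standard graph: connected, finitely many vertices and edges, no degree-two vertices.
 (The Laplacian and Neumann--Kirchhoff conditions are built into the notions below.)\<close>
definition standard_graph :: "('v,'e) mgraph \<Rightarrow> bool" where
  "standard_graph G \<longleftrightarrow> wf_graph G \<and> connected_graph G \<and> (\<forall>v\<in>verts G. deg G v \<noteq> 2)"

definition Lmin :: "('v,'e) mgraph \<Rightarrow> real" where
  "Lmin G = Min (len G ` edges G)"

definition star_graph :: "('v,'e) mgraph \<Rightarrow> bool" where
  "star_graph G \<longleftrightarrow> (\<exists>c\<in>verts G.
      (\<forall>e\<in>edges G. (fst (ends G e) = c \<and> snd (ends G e) \<noteq> c) \<or>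
                   (snd (ends G e) = c \<and> fst (ends G e) \<noteq> c)) \<and>
      (\<forall>v\<in>verts G - {c}. deg G v = 1))"

definition interval_graph :: "('v,'e) mgraph \<Rightarrow> bool" where
  "interval_graph G \<longleftrightarrow> card (edges G) = 1 \<and>
     (\<forall>e\<in>edges G. fst (ends G e) \<noteq> snd (ends G e) \<and>
                  verts G = {fst (ends G e), snd (ends G e)})"

text \<open>A function on G is given edgewise: f e is defined on [0, len e].\<close>

definition Dv :: "('v,'e) mgraph \<Rightarrow> ('e \<Rightarrow> real \<Rightarrow> real) \<Rightarrow> 'e \<Rightarrow> real \<Rightarrow> real" where
  "Dv G f e x = vector_derivative (f e) (at x within {0..len G e})"

definition endval :: "('v,'e) mgraph \<Rightarrow> ('e \<Rightarrow> real \<Rightarrow> real) \<Rightarrow> 'e \<Rightarrow> bool \<Rightarrow> real" where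
  "endval G f e b = f e (if b then len G e else 0)"

definition outder :: "('v,'e) mgraph \<Rightarrow> ('e \<Rightarrow> real \<Rightarrow> real) \<Rightarrow> 'e \<Rightarrow> bool \<Rightarrow> real" where
  "outder G f e b = (if b then - Dv G f e (len G e) else Dv G f e 0)"

definition solves :: "('v,'e) mgraph \<Rightarrow> real \<Rightarrow> ('e \<Rightarrow> real \<Rightarrow> real) \<Rightarrow> bool" where
  "solves G lam f \<longleftrightarrow>
     (\<forall>e\<in>edges G. \<forall>x\<in>{0..len G e}.
        (f e has_vector_derivative Dv G f e x) (at x within {0..len G e}) \<and>
        (Dv G f e has_vector_derivative (- lam * f e x)) (at x within {0..len G e})) \<and>
     (\<forall>v\<in>verts G. \<forall>p\<in>ends_at G v. \<forall>q\<in>ends_at G v.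
        endval G f (fst p) (snd p) = endval G f (fst q) (snd q)) \<and>
     (\<forall>v\<in>verts G. (\<Sum>p\<in>ends_at G v. outder G f (fst p) (snd p)) = 0)"

definition is_eigenfunction :: "('v,'e) mgraph \<Rightarrow> real \<Rightarrow> ('e \<Rightarrow> real \<Rightarrow> real) \<Rightarrow> bool" where
  "is_eigenfunction G lam f \<longleftrightarrow> solves G lam f \<and> (\<exists>e\<in>edges G. \<exists>x\<in>{0..len G e}. f e x \<noteq> 0)"

definition eigenvalue :: "('v,'e) mgraph \<Rightarrow> real \<Rightarrow> bool" where
  "eigenvalue G lam \<longleftrightarrow> (\<exists>f. is_eigenfunction G lam f)"

definition lin_indep :: "('v,'e) mgraph \<Rightarrow> ('e \<Rightarrow> real \<Rightarrow> real) list \<Rightarrow> bool" where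
  "lin_indep G gs \<longleftrightarrow> (\<forall>c :: nat \<Rightarrow> real.
      (\<forall>e\<in>edges G. \<forall>x\<in>{0..len G e}. (\<Sum>i<length gs. c i * (gs ! i) e x) = 0) \<longrightarrow>
      (\<forall>i<length gs. c i = 0))"

definition mult :: "('v,'e) mgraph \<Rightarrow> real \<Rightarrow> nat" where
  "mult G lam = Sup {n. \<exists>gs. length gs = n \<and> (\<forall>g\<in>set gs. solves G lam g) \<and> lin_indep G gs}"

definition generic_eigenfunction :: "('v,'e) mgraph \<Rightarrow> real \<Rightarrow> ('e \<Rightarrow> real \<Rightarrow> real) \<Rightarrow> bool" where
  "generic_eigenfunction G lam f \<longleftrightarrow>
     is_eigenfunction G lam f \<and> mult G lam = 1 \<and>
     (\<forall>v\<in>verts G. \<forall>p\<in>ends_at G v. endval G f (fst p) (snd p) \<noteq> 0) \<and>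
     (\<forall>v\<in>verts G - boundary G. \<forall>p\<in>ends_at G v. outder G f (fst p) (snd p) \<noteq> 0)"

text \<open>N(Omega) = number of eigenvalues in [0, k^2), counted with multiplicity.\<close>
definition Ncount :: "('v,'e) mgraph \<Rightarrow> real \<Rightarrow> nat" where
  "Ncount G k = (\<Sum>lam\<in>{lam. 0 \<le> lam \<and> lam < k\<^sup>2 \<and> eigenvalue G lam}. mult G lam)"

definition nodal_count :: "('v,'e) mgraph \<Rightarrow> ('e \<Rightarrow> real \<Rightarrow> real) \<Rightarrow> nat" where
  "nodal_count G g = card {(e, x). e \<in> edges G \<and> 0 < x \<and> x < len G e \<and> g e x = 0}"

definition neumann_pts :: "('v,'e) mgraph \<Rightarrow> ('e \<Rightarrow> real \<Rightarrow> real) \<Rightarrow> ('e \<times> real) set" where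
  "neumann_pts G f = {(e, x). e \<in> edges G \<and> 0 < x \<and> x < len G e \<and> Dv G f e x = 0}"

definition cutpts :: "('v,'e) mgraph \<Rightarrow> ('e \<Rightarrow> real \<Rightarrow> real) \<Rightarrow> 'e \<Rightarrow> real set" where
  "cutpts G f e = {0, len G e} \<union> {x. (e, x) \<in> neumann_pts G f}"

definition pieces :: "('v,'e) mgraph \<Rightarrow> ('e \<Rightarrow> real \<Rightarrow> real) \<Rightarrow> ('e \<times> real \<times> real) set" where
  "pieces G f = {(e, a, b). e \<in> edges G \<and> a \<in> cutpts G f e \<and> b \<in> cutpts G f e \<and> a < b \<and>
                     (\<forall>y\<in>cutpts G f e. \<not> (a < y \<and> y < b))}"

text \<open>Vertices of the graph cut at the Neumann points: original vertices (Inl v), and for a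
 Neumann point (e,x) two new boundary vertices: Inr (e,x,False) on the side of smaller
 parameter and Inr (e,x,True) on the side of larger parameter.\<close>
definition cut_ends :: "('v,'e) mgraph \<Rightarrow> 'e \<times> real \<times> real \<Rightarrow>
    ('v + 'e \<times> real \<times> bool) \<times> ('v + 'e \<times> real \<times> bool)" where
  "cut_ends G p = (case p of (e, a, b) \<Rightarrow>
     ((if a = 0 then Inl (fst (ends G e)) else Inr (e, a, True)),
      (if b = len G e then Inl (snd (ends G e)) else Inr (e, b, False))))"

definition cut_graph :: "('v,'e) mgraph \<Rightarrow> ('e \<Rightarrow> real \<Rightarrow> real) \<Rightarrow>
    ('v + 'e \<times> real \<times> bool, 'e \<times> real \<times> real) mgraph" where
  "cut_graph G f = \<lparr> verts = {fst (cut_ends G p) | p. p \<in> pieces G f} \<union> {snd (cut_ends G p) | p. p \<in> pieces G f},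
                     edges = pieces G f,
                     ends = cut_ends G,
                     len = (\<lambda>(e, a, b). b - a) \<rparr>"

definition edge_adj :: "('v,'e) mgraph \<Rightarrow> ('e \<times> 'e) set" where
  "edge_adj G = {(p, q). p \<in> edges G \<and> q \<in> edges G \<and> (\<exists>b b'. endpt G p b = endpt G q b')}"

definition component_graph :: "('v,'e) mgraph \<Rightarrow> 'e \<Rightarrow> ('v,'e) mgraph" where
  "component_graph G p0 =
     (let C = {q \<in> edges G. (p0, q) \<in> (edge_adj G)\<^sup>*} in
      \<lparr> verts = {endpt G q b | q b. q \<in> C}, edges = C, ends = ends G, len = len G \<rparr>)"

text \<open>Omega is a Neumann domain of f: the closure of a connected component of G minus the
 Neumann points, regarded as a metric graph whose Neumann points are boundary vertices.\<close>
definition neumann_domain :: "('v,'e) mgraph \<Rightarrow> ('e \<Rightarrow> real \<Rightarrow> real) \<Rightarrow>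
    ('v + 'e \<times> real \<times> bool, 'e \<times> real \<times> real) mgraph \<Rightarrow> bool" where
  "neumann_domain G f \<Omega> \<longleftrightarrow>
     (\<exists>p0\<in>edges (cut_graph G f). \<Omega> = component_graph (cut_graph G f) p0)"

definition restrict_nd :: "('e \<Rightarrow> real \<Rightarrow> real) \<Rightarrow> ('e \<times> real \<times> real) \<Rightarrow> real \<Rightarrow> real" where
  "restrict_nd f p t = (case p of (e, a, b) \<Rightarrow> f e (a + t))"

end

(* Since k > pi / Lmin, on every edge f' = -f(0) k sin(kx) + f'(0) cos(kx) changes sign within any
   interval of length pi/k, so every edge carries a Neumann point, and two Neumann points on an
   edge are at least pi/k apart.  Hence no piece between consecutive cut points joins two vertices
   of the graph, the Neumann points become leaves, and a Neumann domain is a star (possibly a single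
   interval) with Neumann conditions at its leaves and k l_e <= pi on every edge.

   On such a star, an eigenfunction with eigenvalue mu^2 is A_e cos(mu (distance to the leaf)) on
   each edge e; continuity and the Kirchhoff condition at the centre reduce the spectrum to the
   secular function F(mu) = sum_e tan(mu l_e).  Below k, the eigenvalues besides 0 are the poles q
   of F, with multiplicity #{e. q l_e = pi/2} - 1, and the roots of F away from the poles, which
   are simple.  F increases from -infinity to +infinity between consecutive poles, is positive
   before the first pole and negative after the last, so there is exactly one root between
   consecutive poles and N(Omega) = #{e. k l_e > pi/2}.  This is also the number of zeros of f on
   Omega, one on each edge with k l_e > pi/2.  Genericity of the restriction is inherited from f,
   and k^2 is simple since k is not a pole. *)

theory Submission
  imports Defs
begin

section \<open>The equation -h'' = lam h on an interval\<close>

lemma harmonic_ode_zero: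
  fixes h h' :: "real \<Rightarrow> real"
  assumes hd: "\<And>t. t \<in> {0..l} \<Longrightarrow> (h has_real_derivative h' t) (at t within {0..l})"
    and hd2: "\<And>t. t \<in> {0..l} \<Longrightarrow> (h' has_real_derivative (- lam * h t)) (at t within {0..l})"
    and lam: "lam \<ge> 0" and t0: "t0 \<in> {0..l}" and z1: "h t0 = 0" and z2: "h' t0 = 0"
  shows "\<forall>t\<in>{0..l}. h t = 0 \<and> h' t = 0"
proof -
  define E where "E t = (h' t)\<^sup>2 + lam * (h t)\<^sup>2" for t
  have "\<exists>c. \<forall>x\<in>{0..l}. E x = c"
  proof (rule has_derivative_zero_constant)
    fix x assume x: "x \<in> {0..l::real}"
    have "(E has_real_derivative (2 * h' x * (- lam * h x) + lam * (2 * h x * h' x))) (at x within {0..l})"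
      unfolding E_def[abs_def] by (auto intro!: derivative_eq_intros hd hd2 x)
    then have "(E has_real_derivative 0) (at x within {0..l})"
      by (simp add: algebra_simps)
    then show "(E has_derivative (\<lambda>h. 0)) (at x within {0..l})"
      by (simp add: has_field_derivative_def lambda_zero)
  qed simp
  then obtain c where c: "\<forall>x\<in>{0..l}. E x = c" by blast
  have "c = 0" using c[rule_format, OF t0] z1 z2 by (simp add: E_def)
  have h'_zero: "h' t = 0" if "t \<in> {0..l}" for t
  proof -
    have "(h' t)\<^sup>2 + lam * (h t)\<^sup>2 = 0" using c that \<open>c = 0\<close> by (auto simp: E_def)
    moreover have "lam * (h t)\<^sup>2 \<ge> 0" using lam by simp
    ultimately show ?thesis by (smt (verit) zero_le_power2 power2_eq_square power_eq_0_iff)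
  qed
  have "\<exists>c. \<forall>x\<in>{0..l}. h x = c"
  proof (rule has_derivative_zero_constant)
    fix x assume x: "x \<in> {0..l::real}"
    have "(h has_real_derivative 0) (at x within {0..l})" using hd[OF x] h'_zero[OF x] by simp
    then show "(h has_derivative (\<lambda>h. 0)) (at x within {0..l})"
      by (simp add: has_field_derivative_def lambda_zero)
  qed simp
  then obtain c' where "\<forall>x\<in>{0..l}. h x = c'" by blast
  then show ?thesis using t0 z1 h'_zero by auto
qed

lemma harmonic_ode_critical_point:
  fixes h h' :: "real \<Rightarrow> real"
  assumes hd: "\<And>t. t \<in> {0..l} \<Longrightarrow> (h has_real_derivative h' t) (at t within {0..l})"
    and hd2: "\<And>t. t \<in> {0..l} \<Longrightarrow> (h' has_real_derivative (- lam * h t)) (at t within {0..l})"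
    and lam: "lam \<ge> 0" and t0: "t0 \<in> {0..l}" and crit: "h' t0 = 0"
  shows "\<forall>t\<in>{0..l}. h t = h t0 * cos (sqrt lam * (t - t0)) \<and>
                     h' t = - h t0 * sqrt lam * sin (sqrt lam * (t - t0))"
proof -
  define m where "m = sqrt lam"
  have m2: "m * m = lam" using lam by (simp add: m_def)
  define w where "w t = h t - h t0 * cos (m * (t - t0))" for t
  define w' where "w' t = h' t + h t0 * m * sin (m * (t - t0))" for t
  have "\<forall>t\<in>{0..l}. w t = 0 \<and> w' t = 0"
  proof (rule harmonic_ode_zero[OF _ _ lam t0])
    fix t assume t: "t \<in> {0..l}"
    show "(w has_real_derivative w' t) (at t within {0..l})"
      unfolding w_def[abs_def] w'_def by (auto intro!: derivative_eq_intros hd t)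
    have "(w' has_real_derivative (- lam * h t + h t0 * m * (cos (m * (t - t0)) * m))) (at t within {0..l})"
      unfolding w'_def[abs_def] by (auto intro!: derivative_eq_intros hd2 t)
    then show "(w' has_real_derivative (- lam * w t)) (at t within {0..l})"
      by (simp add: w_def algebra_simps flip: m2)
  qed (auto simp: w_def w'_def crit)
  then show ?thesis by (auto simp: w_def w'_def m_def)
qed

lemma harmonic_ode_solution:
  fixes h h' :: "real \<Rightarrow> real"
  assumes hd: "\<And>t. t \<in> {0..l} \<Longrightarrow> (h has_real_derivative h' t) (at t within {0..l})"
    and hd2: "\<And>t. t \<in> {0..l} \<Longrightarrow> (h' has_real_derivative (- (\<mu>\<^sup>2) * h t)) (at t within {0..l})"
    and mu: "\<mu> > 0" and l: "0 \<le> l"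
  shows "\<forall>t\<in>{0..l}. h t = h 0 * cos (\<mu> * t) + h' 0 / \<mu> * sin (\<mu> * t) \<and>
                     h' t = - h 0 * \<mu> * sin (\<mu> * t) + h' 0 * cos (\<mu> * t)"
proof -
  define a where "a = h 0"
  define b where "b = h' 0 / \<mu>"
  have bm: "b * \<mu> = h' 0" using mu by (simp add: b_def)
  define w where "w t = h t - (a * cos (\<mu> * t) + b * sin (\<mu> * t))" for t
  define w' where "w' t = h' t - (- a * \<mu> * sin (\<mu> * t) + b * \<mu> * cos (\<mu> * t))" for t
  have d1: "(w has_real_derivative w' t) (at t within {0..l})" if t: "t \<in> {0..l}" for t
    unfolding w_def[abs_def] w'_def by (auto intro!: derivative_eq_intros hd[OF t])
  have d2: "(w' has_real_derivative (- (\<mu>\<^sup>2) * w t)) (at t within {0..l})" if t: "t \<in> {0..l}" for t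
  proof -
    have "(w' has_real_derivative (- (\<mu>\<^sup>2) * h t - (- a * \<mu> * (cos (\<mu> * t) * \<mu>) + b * \<mu> * (- sin (\<mu> * t) * \<mu>)))) (at t within {0..l})"
      unfolding w'_def[abs_def] by (auto intro!: derivative_eq_intros hd2[OF t])
    moreover have "- (\<mu>\<^sup>2) * h t - (- a * \<mu> * (cos (\<mu> * t) * \<mu>) + b * \<mu> * (- sin (\<mu> * t) * \<mu>)) = - (\<mu>\<^sup>2) * w t"
      by (simp add: w_def power2_eq_square algebra_simps)
    ultimately show ?thesis by simp
  qed
  have l0: "0 \<in> {0..l}" using l by simp
  have "\<forall>t\<in>{0..l}. w t = 0 \<and> w' t = 0"
    by (rule harmonic_ode_zero[OF d1 d2 _ l0]) (simp_all add: w_def w'_def a_def bm)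
  then have "\<forall>t\<in>{0..l}. h t = a * cos (\<mu> * t) + b * sin (\<mu> * t) \<and> h' t = - a * \<mu> * sin (\<mu> * t) + b * \<mu> * cos (\<mu> * t)"
    by (auto simp: w_def w'_def)
  then show ?thesis unfolding bm unfolding a_def b_def by blast
qed

section \<open>Bounding multiplicities\<close>

lemma exists_nontrivial_vanishing_combination:
  fixes v :: "'i \<Rightarrow> 'z \<Rightarrow> real"
  assumes "finite Z" "finite I" "card Z < card I"
  shows "\<exists>c. (\<exists>i\<in>I. c i \<noteq> 0) \<and> (\<forall>z\<in>Z. (\<Sum>i\<in>I. c i * v i z) = 0)"
  using assms
proof (induction Z arbitrary: I v rule: finite_induct)
  case empty
  then obtain i where "i \<in> I" by fastforce
  then show ?case by (intro exI[of _ "\<lambda>_. 1"]) auto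
next
  case (insert z Z)
  show ?case
  proof (cases "\<forall>i\<in>I. v i z = 0")
    case True
    have "card Z < card I" using insert by simp
    then obtain c where c: "\<exists>i\<in>I. c i \<noteq> 0" "\<forall>y\<in>Z. (\<Sum>i\<in>I. c i * v i y) = 0"
      using insert.IH[OF insert.prems(1)] by blast
    then show ?thesis using True by (intro exI[of _ c]) auto
  next
    case False
    then obtain j where j: "j \<in> I" "v j z \<noteq> 0" by auto
    \<comment> \<open>Gaussian elimination: subtract multiples of v j so that all other vectors vanish at z.\<close>
    define I' where "I' = I - {j}"
    define v' where "v' i y = v i y - (v i z / v j z) * v j y" for i y
    have "card Z < card I'" using insert j by (simp add: I'_def card_Diff_singleton)
    moreover have "finite I'" using insert by (simp add: I'_def)
    ultimately obtain c' where c': "\<exists>i\<in>I'. c' i \<noteq> 0" "\<forall>y\<in>Z. (\<Sum>i\<in>I'. c' i * v' i y) = 0"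
      using insert.IH by blast
    define c where "c i = (if i = j then - (\<Sum>i\<in>I'. c' i * (v i z / v j z)) else c' i)" for i
    have comb: "(\<Sum>i\<in>I. c i * v i y) = (\<Sum>i\<in>I'. c' i * v' i y)" for y
    proof -
      have "(\<Sum>i\<in>I. c i * v i y) = c j * v j y + (\<Sum>i\<in>I'. c i * v i y)"
        using j insert.prems(1) by (simp add: I'_def sum.remove)
      also have "(\<Sum>i\<in>I'. c i * v i y) = (\<Sum>i\<in>I'. c' i * v i y)"
        by (rule sum.cong) (auto simp: c_def I'_def)
      also have "c j * v j y = - (\<Sum>i\<in>I'. c' i * (v i z / v j z) * v j y)"
        by (simp add: c_def sum_distrib_right)
      finally show ?thesis
        by (simp add: v'_def algebra_simps sum_subtractf)
    qed
    have "(\<Sum>i\<in>I'. c' i * v' i z) = 0" using j by (simp add: v'_def)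
    then have "\<forall>y\<in>insert z Z. (\<Sum>i\<in>I. c i * v i y) = 0" using comb c' by auto
    moreover have "\<exists>i\<in>I. c i \<noteq> 0" using c' by (auto simp: c_def I'_def)
    ultimately show ?thesis by blast
  qed
qed

lemma lin_indep_solutions_length_le:
  fixes \<phi> :: "('e \<Rightarrow> real \<Rightarrow> real) \<Rightarrow> 'z \<Rightarrow> real"
  assumes finZ: "finite Z"
    and rep: "\<And>g. solves G lam g \<Longrightarrow> \<forall>e\<in>edges G. \<forall>x\<in>{0..len G e}. g e x = (\<Sum>z\<in>Z. \<phi> g z * B z e x)"
    and sols: "\<forall>g\<in>set gs. solves G lam g" and indep: "lin_indep G gs"
  shows "length gs \<le> card Z"
proof (rule ccontr)
  let ?n = "length gs"
  assume "\<not> ?n \<le> card Z"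
  then have "card Z < card {..<?n}" by simp
  then obtain c where c: "\<exists>i\<in>{..<?n}. c i \<noteq> 0" "\<forall>z\<in>Z. (\<Sum>i<?n. c i * \<phi> (gs ! i) z) = 0"
    using exists_nontrivial_vanishing_combination[OF finZ, of "{..<?n}" "\<lambda>i z. \<phi> (gs ! i) z"] by auto
  have "(\<Sum>i<?n. c i * (gs ! i) e x) = 0" if e: "e \<in> edges G" and x: "x \<in> {0..len G e}" for e x
  proof -
    have "(\<Sum>i<?n. c i * (gs ! i) e x) = (\<Sum>i<?n. c i * (\<Sum>z\<in>Z. \<phi> (gs ! i) z * B z e x))"
      using rep sols e x by (intro sum.cong) auto
    also have "\<dots> = (\<Sum>z\<in>Z. (\<Sum>i<?n. c i * \<phi> (gs ! i) z) * B z e x)"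
      by (simp add: sum_distrib_left sum_distrib_right mult.assoc sum.swap[of _ "{..<?n}"])
    also have "\<dots> = 0" using c by simp
    finally show ?thesis .
  qed
  then have "\<forall>i<?n. c i = 0" using indep by (simp add: lin_indep_def)
  then show False using c by auto
qed

lemma mult_le_card:
  fixes \<phi> :: "('e \<Rightarrow> real \<Rightarrow> real) \<Rightarrow> 'z \<Rightarrow> real"
  assumes finZ: "finite Z"
    and rep: "\<And>g. solves G lam g \<Longrightarrow> \<forall>e\<in>edges G. \<forall>x\<in>{0..len G e}. g e x = (\<Sum>z\<in>Z. \<phi> g z * B z e x)"
  shows "mult G lam \<le> card Z"
  unfolding mult_def
proof (rule cSup_least)
  show "{n. \<exists>gs. length gs = n \<and> (\<forall>g\<in>set gs. solves G lam g) \<and> lin_indep G gs} \<noteq> {}"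
    by (auto simp: lin_indep_def intro!: exI[of _ "[]"])
qed (use lin_indep_solutions_length_le[OF finZ rep] in auto)

lemma length_le_mult:
  fixes \<phi> :: "('e \<Rightarrow> real \<Rightarrow> real) \<Rightarrow> 'z \<Rightarrow> real"
  assumes finZ: "finite Z"
    and rep: "\<And>g. solves G lam g \<Longrightarrow> \<forall>e\<in>edges G. \<forall>x\<in>{0..len G e}. g e x = (\<Sum>z\<in>Z. \<phi> g z * B z e x)"
    and sols: "\<forall>g\<in>set gs. solves G lam g" and indep: "lin_indep G gs"
  shows "length gs \<le> mult G lam"
  unfolding mult_def
proof (rule cSup_upper)
  show "bdd_above {n. \<exists>gs. length gs = n \<and> (\<forall>g\<in>set gs. solves G lam g) \<and> lin_indep G gs}"
    using lin_indep_solutions_length_le[OF finZ rep] by (auto simp: bdd_above_def)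
qed (use sols indep in auto)

lemma lin_indep_eigenfunction:
  assumes "is_eigenfunction G lam g"
  shows "lin_indep G [g]"
proof -
  obtain e x where ex: "e \<in> edges G" "x \<in> {0..len G e}" "g e x \<noteq> 0"
    using assms by (auto simp: is_eigenfunction_def)
  show ?thesis unfolding lin_indep_def
  proof (rule allI, rule impI)
    fix c :: "nat \<Rightarrow> real"
    assume "\<forall>e\<in>edges G. \<forall>x\<in>{0..len G e}. (\<Sum>i<length [g]. c i * ([g] ! i) e x) = 0"
    then have "c 0 * g e x = 0" using ex by auto
    then show "\<forall>i<length [g]. c i = 0" using ex by auto
  qed
qed

lemma mult_eq_0_if_not_eigenvalue:
  assumes "\<not> eigenvalue G lam"
  shows "mult G lam = 0"
proof -
  have "mult G lam \<le> card ({} :: nat set)"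
    using assms by (intro mult_le_card[of "{}::nat set" G lam "\<lambda>_ _. 0" "\<lambda>_ _ _. 0"])
      (auto simp: eigenvalue_def is_eigenfunction_def)
  then show ?thesis by simp
qed

section \<open>The secular function of a star\<close>

lemma tan_less_tan:
  fixes a b :: real
  assumes "0 \<le> a" "a < b" "b \<le> pi" "\<not> (a \<le> pi/2 \<and> pi/2 \<le> b)"
  shows "tan a < tan b"
proof (cases "b < pi/2")
  case True
  then show ?thesis using assms by (intro tan_monotone) auto
next
  case False
  then have "a > pi/2" using assms by auto
  have "tan (a - pi) < tan (b - pi)" using assms \<open>a > pi/2\<close> by (intro tan_monotone) auto
  moreover have "tan (a - pi) = tan a" "tan (b - pi) = tan b"
    using tan_periodic_pi[of "a - pi"] tan_periodic_pi[of "b - pi"] by auto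
  ultimately show ?thesis by simp
qed

lemma filterlim_sum_at_top:
  fixes f :: "'b \<Rightarrow> 'a \<Rightarrow> real"
  assumes "finite S" "S \<noteq> {}" "\<And>e. e \<in> S \<Longrightarrow> filterlim (f e) at_top F"
  shows "filterlim (\<lambda>x. \<Sum>e\<in>S. f e x) at_top F"
  using assms
proof (induction S rule: finite_ne_induct)
  case (singleton x)
  then show ?case by simp
next
  case (insert x S)
  then show ?case by (simp add: filterlim_at_top_add_at_top)
qed

text \<open>P and l are the edges and edge lengths of a star with Neumann leaves.  Its eigenvalues mu^2
  with 0 < mu < k are the squares of the poles, where mu l e = pi/2 for some edge e, and of the
  regular roots of the secular function.  The hypotheses on k hold when k^2 is an eigenvalue whose
  eigenfunction has no interior critical point and does not vanish at the centre.\<close>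

locale star_secular =
  fixes P :: "'b set" and l :: "'b \<Rightarrow> real" and k :: real
  assumes finite_P: "finite P" and P_nonempty: "P \<noteq> {}" and l_pos: "\<And>e. e \<in> P \<Longrightarrow> l e > 0"
    and k_pos: "k > 0"
    and k_l_le_pi: "\<And>e. e \<in> P \<Longrightarrow> k * l e \<le> pi"
    and cos_k_l_nonzero: "\<And>e. e \<in> P \<Longrightarrow> cos (k * l e) \<noteq> 0"
    and secular_k: "(\<Sum>e\<in>P. tan (k * l e)) = 0"
begin

definition secular :: "real \<Rightarrow> real" where
  "secular \<mu> = (\<Sum>e\<in>P. tan (\<mu> * l e))"

definition poles :: "real set" where
  "poles = {\<mu>. 0 < \<mu> \<and> \<mu> < k \<and> (\<exists>e\<in>P. cos (\<mu> * l e) = 0)}"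

definition regular_roots :: "real set" where
  "regular_roots = {\<mu>. 0 < \<mu> \<and> \<mu> < k \<and> \<mu> \<notin> poles \<and> secular \<mu> = 0}"

definition pole_edges :: "real \<Rightarrow> 'b set" where
  "pole_edges \<mu> = {e\<in>P. cos (\<mu> * l e) = 0}"

lemma cos_zero_iff:
  assumes "e \<in> P" "0 \<le> \<mu>" "\<mu> \<le> k"
  shows "cos (\<mu> * l e) = 0 \<longleftrightarrow> \<mu> * l e = pi/2"
proof
  have "\<mu> * l e \<le> k * l e" using assms l_pos[of e] by (intro mult_right_mono) auto
  then have le: "\<mu> * l e \<le> pi" using k_l_le_pi[OF assms(1)] by linarith
  have ge: "0 \<le> \<mu> * l e" using assms l_pos[of e] by simp
  assume "cos (\<mu> * l e) = 0"
  then show "\<mu> * l e = pi/2" using cos_inj_pi[OF ge le, of "pi/2"] by simp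
next
  assume h: "\<mu> * l e = pi/2"
  show "cos (\<mu> * l e) = 0" unfolding h by (rule cos_pi_half)
qed

lemma k_l_ne_pi_half: "e \<in> P \<Longrightarrow> k * l e \<noteq> pi/2"
  using cos_k_l_nonzero by (metis cos_pi_half)

lemma pole_bounds: "q \<in> poles \<Longrightarrow> 0 < q \<and> q < k"
  by (auto simp: poles_def)

lemma cos_nonzero_off_poles:
  assumes "0 < \<mu>" "\<mu> \<le> k" "\<mu> \<notin> poles" "e \<in> P"
  shows "cos (\<mu> * l e) \<noteq> 0"
  using assms cos_k_l_nonzero by (cases "\<mu> = k") (auto simp: poles_def)

lemma pole_edges_at_pole:
  assumes "q \<in> poles" "e \<in> pole_edges q"
  shows "q * l e = pi/2"
  using assms cos_zero_iff[of e q] by (auto simp: poles_def pole_edges_def)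

lemma poles_eq: "poles = (\<lambda>e. pi / (2 * l e)) ` {e\<in>P. pi/2 < k * l e}"
proof (intro set_eqI iffI)
  fix \<mu> assume "\<mu> \<in> poles"
  then obtain e where e: "e \<in> P" "0 < \<mu>" "\<mu> < k" "cos (\<mu> * l e) = 0" by (auto simp: poles_def)
  then have "\<mu> * l e = pi/2" using cos_zero_iff by auto
  moreover have "\<mu> * l e < k * l e" using e l_pos[of e] by simp
  ultimately have "pi/2 < k * l e" by linarith
  moreover have "\<mu> = pi / (2 * l e)" using \<open>\<mu> * l e = pi/2\<close> l_pos[of e] e by (simp add: field_simps)
  ultimately show "\<mu> \<in> (\<lambda>e. pi / (2 * l e)) ` {e\<in>P. pi/2 < k * l e}"
    using e by auto
next
  fix \<mu> assume "\<mu> \<in> (\<lambda>e. pi / (2 * l e)) ` {e\<in>P. pi/2 < k * l e}"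
  then obtain e where e: "e \<in> P" "pi/2 < k * l e" "\<mu> = pi / (2 * l e)" by auto
  have lp: "l e > 0" using l_pos e by auto
  have "\<mu> * l e = pi/2" using e lp by (simp add: field_simps)
  then have "\<mu> * l e < k * l e" using e by linarith
  then have "\<mu> < k" using lp by (meson less_le mult_right_less_imp_less)
  moreover have "0 < \<mu>" using e lp by simp
  ultimately show "\<mu> \<in> poles" using e \<open>\<mu> * l e = pi/2\<close> by (auto simp: poles_def intro!: bexI[of _ e])
qed

lemma finite_poles: "finite poles"
  unfolding poles_eq using finite_P by simp

lemma poles_nonempty: "poles \<noteq> {}"
proof
  assume "poles = {}"
  then have "\<forall>e\<in>P. \<not> pi/2 < k * l e" unfolding poles_eq by auto
  then have "\<forall>e\<in>P. k * l e < pi/2" using k_l_ne_pi_half by force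
  then have "\<forall>e\<in>P. 0 < tan (k * l e)" using l_pos k_pos by (auto intro!: tan_gt_zero)
  then have "0 < (\<Sum>e\<in>P. tan (k * l e))" using finite_P P_nonempty by (intro sum_pos) auto
  then show False using secular_k by simp
qed

lemma finite_pole_edges: "finite (pole_edges q)"
  using finite_P by (simp add: pole_edges_def)

lemma pole_edges_nonempty: "q \<in> poles \<Longrightarrow> pole_edges q \<noteq> {}"
  by (auto simp: poles_def pole_edges_def)

lemma sum_card_pole_edges: "(\<Sum>q\<in>poles. card (pole_edges q)) = card {e\<in>P. pi/2 < k * l e}"
proof -
  let ?P' = "{e\<in>P. pi/2 < k * l e}" and ?h = "\<lambda>e. pi / (2 * l e)"
  have "card ?P' = (\<Sum>e\<in>?P'. 1)" by simp
  also have "\<dots> = (\<Sum>q\<in>?h ` ?P'. \<Sum>e\<in>{x\<in>?P'. ?h x = q}. 1)"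
    by (rule sum.image_gen) (use finite_P in simp)
  also have "\<dots> = (\<Sum>q\<in>poles. card (pole_edges q))"
    unfolding poles_eq[symmetric]
  proof (rule sum.cong[OF refl])
    fix q assume q: "q \<in> poles"
    then have q0: "0 < q" "q < k" by (auto simp: poles_def)
    have "{x\<in>?P'. ?h x = q} = pole_edges q"
    proof (intro set_eqI iffI)
      fix x assume x: "x \<in> {x\<in>?P'. ?h x = q}"
      then have "q * l x = pi/2" using l_pos[of x] by (auto simp: field_simps)
      then show "x \<in> pole_edges q" using x by (auto simp: pole_edges_def)
    next
      fix x assume x: "x \<in> pole_edges q"
      then have "q * l x = pi/2" using pole_edges_at_pole[OF q] by simp
      moreover have "q * l x < k * l x" using q0 l_pos[of x] x by (simp add: pole_edges_def)
      ultimately have "pi/2 < k * l x" by linarith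
      moreover have "?h x = q" using \<open>q * l x = pi/2\<close> l_pos[of x] x by (simp add: pole_edges_def field_simps)
      ultimately show "x \<in> {x\<in>?P'. ?h x = q}" using x by (simp add: pole_edges_def)
    qed
    then show "(\<Sum>e\<in>{x\<in>?P'. ?h x = q}. 1) = card (pole_edges q)" by simp
  qed
  finally show ?thesis by simp
qed

lemma secular_strict_mono:
  assumes "0 \<le> x" "x < y" "y \<le> k" "\<forall>\<mu>\<in>{x..y}. \<forall>e\<in>P. cos (\<mu> * l e) \<noteq> 0"
  shows "secular x < secular y"
  unfolding secular_def
proof (rule sum_strict_mono[OF finite_P P_nonempty])
  fix e assume e: "e \<in> P"
  have lp: "l e > 0" using l_pos e by auto
  have "y * l e \<le> k * l e" using assms lp by (intro mult_right_mono) auto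
  then have yl: "y * l e \<le> pi" using k_l_le_pi[OF e] by linarith
  have no_pole: "\<not> (x * l e \<le> pi/2 \<and> pi/2 \<le> y * l e)"
  proof
    assume h: "x * l e \<le> pi/2 \<and> pi/2 \<le> y * l e"
    define z where "z = pi / (2 * l e)"
    have zz: "z * l e = pi/2" using lp by (simp add: z_def)
    have "z \<in> {x..y}" using h lp by (auto simp: z_def field_simps)
    moreover have "cos (z * l e) = 0" unfolding zz by (rule cos_pi_half)
    ultimately show False using assms(4) e by auto
  qed
  show "tan (x * l e) < tan (y * l e)"
    using assms lp yl no_pole by (intro tan_less_tan) auto
qed

lemma continuous_on_secular:
  assumes "\<forall>\<mu>\<in>S. \<forall>e\<in>P. cos (\<mu> * l e) \<noteq> 0"
  shows "continuous_on S secular"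
  unfolding secular_def using assms by (intro continuous_intros) auto

lemma secular_pos_below_poles:
  assumes "0 < \<mu>" "\<mu> < Min poles"
  shows "secular \<mu> > 0"
  unfolding secular_def
proof (rule sum_pos[OF finite_P P_nonempty])
  fix e assume e: "e \<in> P"
  have lp: "l e > 0" using l_pos e by auto
  have "\<mu> * l e < pi/2"
  proof (cases "pi/2 < k * l e")
    case True
    then have "pi / (2 * l e) \<in> poles" unfolding poles_eq using e by auto
    then have "Min poles \<le> pi / (2 * l e)" using finite_poles by simp
    then have "\<mu> < pi / (2 * l e)" using assms by linarith
    then show ?thesis using lp by (simp add: field_simps)
  next
    case False
    have "Min poles < k" using finite_poles poles_nonempty pole_bounds Min_in by blast
    then have "\<mu> * l e < k * l e" using lp assms by simp
    then show ?thesis using False by simp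
  qed
  then show "0 < tan (\<mu> * l e)" using assms lp by (intro tan_gt_zero) auto
qed

lemma secular_neg_above_poles:
  assumes "Max poles < \<mu>" "\<mu> < k"
  shows "secular \<mu> < 0"
proof -
  have "0 < \<mu>" using assms poles_nonempty finite_poles pole_bounds by (meson Max_in less_trans)
  have "secular \<mu> < secular k"
  proof (rule secular_strict_mono)
    show "\<forall>x\<in>{\<mu>..k}. \<forall>e\<in>P. cos (x * l e) \<noteq> 0"
    proof (intro ballI)
      fix x e assume x: "x \<in> {\<mu>..k}" and e: "e \<in> P"
      have "x \<notin> poles" using x assms finite_poles by (auto dest: Max_ge)
      then show "cos (x * l e) \<noteq> 0" using cos_nonzero_off_poles[of x e] x e \<open>0 < \<mu>\<close> by auto
    qed
  qed (use assms \<open>0 < \<mu>\<close> in auto)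
  then show ?thesis using secular_k by (simp add: secular_def)
qed

lemma secular_split_at_pole:
  "secular = (\<lambda>\<mu>. (\<Sum>e\<in>P - pole_edges q. tan (\<mu> * l e)) + (\<Sum>e\<in>pole_edges q. tan (\<mu> * l e)))"
  unfolding secular_def pole_edges_def by (rule ext, rule sum.subset_diff) (auto simp: finite_P)

lemma tendsto_secular_off_pole_edges:
  "((\<lambda>\<mu>. \<Sum>e\<in>P - pole_edges q. tan (\<mu> * l e)) \<longlongrightarrow>
      (\<Sum>e\<in>P - pole_edges q. tan (q * l e))) (at q within S)"
  by (intro tendsto_intros) (auto simp: pole_edges_def)

lemma secular_at_left_pole:
  assumes "q \<in> poles"
  shows "filterlim secular at_top (at_left q)"
proof -
  have q0: "0 < q" "q < k" using assms pole_bounds by auto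
  have "filterlim (\<lambda>\<mu>. \<Sum>e\<in>pole_edges q. tan (\<mu> * l e)) at_top (at_left q)"
  proof (rule filterlim_sum_at_top[OF finite_pole_edges pole_edges_nonempty[OF assms]])
    fix e assume e: "e \<in> pole_edges q"
    have lp: "l e > 0" using e l_pos by (auto simp: pole_edges_def)
    have qe: "q * l e = pi/2" using pole_edges_at_pole[OF assms e] .
    have "filterlim (\<lambda>\<mu>. \<mu> * l e) (at_left (pi/2)) (at_left q)"
    proof (rule filterlim_at_withinI)
      have "((\<lambda>\<mu>. \<mu> * l e) \<longlongrightarrow> q * l e) (at_left q)" by (intro tendsto_intros)
      then show "filterlim (\<lambda>\<mu>. \<mu> * l e) (nhds (pi/2)) (at_left q)" using qe by simp
      have "eventually (\<lambda>\<mu>. \<mu> \<in> {0<..<q}) (at_left q)" using q0 by (intro eventually_at_left_real)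
      then show "eventually (\<lambda>\<mu>. \<mu> * l e \<in> {..<pi/2} - {pi/2}) (at_left q)"
      proof (rule eventually_mono)
        fix \<mu> assume "\<mu> \<in> {0<..<q::real}"
        then have "\<mu> * l e < q * l e" using lp by simp
        then show "\<mu> * l e \<in> {..<pi/2} - {pi/2}" using qe by simp
      qed
    qed
    then show "filterlim (\<lambda>\<mu>. tan (\<mu> * l e)) at_top (at_left q)"
      by (rule filterlim_compose[OF filterlim_tan_at_left])
  qed
  then show ?thesis
    by (subst secular_split_at_pole)
      (rule filterlim_tendsto_add_at_top[OF tendsto_secular_off_pole_edges])
qed

lemma secular_at_right_pole:
  assumes "q \<in> poles"
  shows "filterlim secular at_bot (at_right q)"
proof -
  have "filterlim (\<lambda>\<mu>. \<Sum>e\<in>pole_edges q. tan (pi - \<mu> * l e)) at_top (at_right q)"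
  proof (rule filterlim_sum_at_top[OF finite_pole_edges pole_edges_nonempty[OF assms]])
    fix e assume e: "e \<in> pole_edges q"
    have lp: "l e > 0" using e l_pos by (auto simp: pole_edges_def)
    have qe: "q * l e = pi/2" using pole_edges_at_pole[OF assms e] .
    have "filterlim (\<lambda>\<mu>. pi - \<mu> * l e) (at_left (pi/2)) (at_right q)"
    proof (rule filterlim_at_withinI)
      have "((\<lambda>\<mu>. pi - \<mu> * l e) \<longlongrightarrow> pi - q * l e) (at_right q)" by (intro tendsto_intros)
      then show "filterlim (\<lambda>\<mu>. pi - \<mu> * l e) (nhds (pi/2)) (at_right q)" using qe by simp
      have "eventually (\<lambda>\<mu>. \<mu> \<in> {q<..<q+1}) (at_right q)" by (intro eventually_at_right_real) simp
      then show "eventually (\<lambda>\<mu>. pi - \<mu> * l e \<in> {..<pi/2} - {pi/2}) (at_right q)"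
      proof (rule eventually_mono)
        fix \<mu> assume "\<mu> \<in> {q<..<q+1::real}"
        then have "\<mu> * l e > q * l e" using lp by simp
        then show "pi - \<mu> * l e \<in> {..<pi/2} - {pi/2}" using qe by simp
      qed
    qed
    then show "filterlim (\<lambda>\<mu>. tan (pi - \<mu> * l e)) at_top (at_right q)"
      by (rule filterlim_compose[OF filterlim_tan_at_left])
  qed
  then have "filterlim (\<lambda>\<mu>. - (\<Sum>e\<in>P - pole_edges q. tan (\<mu> * l e)) + (\<Sum>e\<in>pole_edges q. tan (pi - \<mu> * l e)))
      at_top (at_right q)"
    by (rule filterlim_tendsto_add_at_top[OF tendsto_minus[OF tendsto_secular_off_pole_edges]])
  moreover have "tan (pi - x) = - tan x" for x
    using tan_periodic_pi[of "-x"] by simp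
  ultimately have "filterlim (\<lambda>\<mu>. - secular \<mu>) at_top (at_right q)"
    by (subst secular_split_at_pole) (simp add: sum_negf)
  then show ?thesis by (simp add: filterlim_uminus_at_bot)
qed

lemma secular_root_between_poles:
  assumes q1: "q1 \<in> poles" and q2: "q2 \<in> poles" and lt: "q1 < q2"
    and between: "\<forall>q\<in>poles. \<not> (q1 < q \<and> q < q2)"
  shows "\<exists>r. q1 < r \<and> r < q2 \<and> secular r = 0"
proof -
  have q10: "0 < q1" "q2 < k" using q1 q2 pole_bounds by auto
  have nz: "cos (x * l e) \<noteq> 0" if "q1 < x" "x < q2" "e \<in> P" for x e
    using cos_nonzero_off_poles[of x e] between that q10 by auto
  have ev1: "eventually (\<lambda>x. 1 \<le> secular x) (at_left q2)"
    using secular_at_left_pole[OF q2] by (simp add: filterlim_at_top)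
  have ev2: "eventually (\<lambda>x. x \<in> {q1<..<q2}) (at_left q2)"
    using lt by (intro eventually_at_left_real)
  obtain y where y: "1 \<le> secular y" "y \<in> {q1<..<q2}"
    using eventually_happens'[OF _ eventually_conj[OF ev1 ev2]] by auto
  have ev3: "eventually (\<lambda>x. secular x \<le> -1) (at_right q1)"
    using secular_at_right_pole[OF q1] by (simp add: filterlim_at_bot)
  have ev4: "eventually (\<lambda>x. x \<in> {q1<..<q2}) (at_right q1)"
    using lt by (intro eventually_at_right_real)
  obtain x where x: "secular x \<le> -1" "x \<in> {q1<..<q2}"
    using eventually_happens'[OF _ eventually_conj[OF ev3 ev4]] by auto
  have "x \<le> y"
  proof (rule ccontr)
    assume "\<not> x \<le> y"
    then have "secular y < secular x"
      using x y q10 nz by (intro secular_strict_mono) auto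
    then show False using x y by simp
  qed
  moreover have "continuous_on {x..y} secular"
    using x y nz by (intro continuous_on_secular) auto
  ultimately obtain r where "x \<le> r" "r \<le> y" "secular r = 0"
    using IVT'[of secular x 0 y] x y by auto
  then show ?thesis using x y by (intro exI[of _ r]) auto
qed

lemma regular_roots_between_poles:
  assumes "r \<in> regular_roots"
  shows "Min poles < r" "r < Max poles"
proof -
  have r: "0 < r" "r < k" "r \<notin> poles" "secular r = 0"
    using assms by (auto simp: regular_roots_def)
  have "Min poles \<in> poles" "Max poles \<in> poles"
    using finite_poles poles_nonempty by simp_all
  then have "Min poles \<noteq> r" "Max poles \<noteq> r" using r(3) by auto
  then show "Min poles < r" "r < Max poles"
    using secular_pos_below_poles[of r] secular_neg_above_poles[of r] r by force+
qed

lemma pole_between_regular_roots: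
  assumes a: "a \<in> regular_roots" and b: "b \<in> regular_roots" and ab: "a < b"
  shows "\<exists>q\<in>poles. a < q \<and> q < b"
proof (rule ccontr)
  assume no_pole: "\<not> (\<exists>q\<in>poles. a < q \<and> q < b)"
  have "secular a < secular b"
  proof (rule secular_strict_mono)
    show "\<forall>\<mu>\<in>{a..b}. \<forall>e\<in>P. cos (\<mu> * l e) \<noteq> 0"
    proof (intro ballI)
      fix \<mu> e assume \<mu>: "\<mu> \<in> {a..b}" and e: "e \<in> P"
      have "\<mu> \<notin> poles" using \<mu> a b no_pole by (auto simp: regular_roots_def less_eq_real_def)
      then show "cos (\<mu> * l e) \<noteq> 0"
        using cos_nonzero_off_poles[OF _ _ _ e] \<mu> a b by (auto simp: regular_roots_def)
    qed
  qed (use a b ab in \<open>auto simp: regular_roots_def\<close>)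
  then show False using a b by (simp add: regular_roots_def)
qed

text \<open>The secular function increases from -\<infinity> to +\<infinity> between consecutive poles and has no
  roots before the first or after the last pole, so mapping each regular root to the next pole is
  a bijection onto the poles other than the first one.\<close>

definition next_pole :: "real \<Rightarrow> real" where
  "next_pole r = Min {q\<in>poles. r < q}"

lemma next_pole:
  assumes "r \<in> regular_roots"
  shows "next_pole r \<in> poles" "r < next_pole r" "\<And>q. q \<in> poles \<Longrightarrow> r < q \<Longrightarrow> next_pole r \<le> q"
proof -
  have ne: "{q\<in>poles. r < q} \<noteq> {}"
    using regular_roots_between_poles(2)[OF assms] finite_poles poles_nonempty Max_in by blast
  have fin: "finite {q\<in>poles. r < q}" using finite_poles by simp
  show "next_pole r \<in> poles" "r < next_pole r" using Min_in[OF fin ne] by (auto simp: next_pole_def)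
  show "\<And>q. q \<in> poles \<Longrightarrow> r < q \<Longrightarrow> next_pole r \<le> q" using fin by (auto simp: next_pole_def)
qed

lemma inj_on_next_pole: "inj_on next_pole regular_roots"
proof -
  have "next_pole a \<noteq> next_pole b" if ab: "a \<in> regular_roots" "b \<in> regular_roots" "a < b" for a b
  proof -
    obtain q where "q \<in> poles" "a < q" "q < b" using pole_between_regular_roots[OF ab] by blast
    then show ?thesis using next_pole[OF ab(1)] next_pole[OF ab(2)] by fastforce
  qed
  then show ?thesis by (metis inj_onI linorder_neqE_linordered_idom)
qed

lemma next_pole_image: "next_pole ` regular_roots = poles - {Min poles}"
proof (intro set_eqI iffI)
  fix q assume "q \<in> next_pole ` regular_roots"
  then obtain r where r: "r \<in> regular_roots" "q = next_pole r" by auto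
  then show "q \<in> poles - {Min poles}"
    using next_pole[OF r(1)] regular_roots_between_poles[OF r(1)] by auto
next
  fix q assume q: "q \<in> poles - {Min poles}"
  let ?S = "{q'\<in>poles. q' < q}"
  have finS: "finite ?S" using finite_poles by simp
  have "Min poles < q" using q finite_poles by (metis DiffD1 DiffD2 Min_le insertI1 order_le_neq_trans)
  then have neS: "?S \<noteq> {}" using finite_poles poles_nonempty Min_in by blast
  define q1 where "q1 = Max ?S"
  have q1: "q1 \<in> poles" "q1 < q" using Max_in[OF finS neS] by (auto simp: q1_def)
  have q1_max: "\<And>q'. q' \<in> poles \<Longrightarrow> q' < q \<Longrightarrow> q' \<le> q1" using finS by (auto simp: q1_def)
  then have between: "\<forall>q'\<in>poles. \<not> (q1 < q' \<and> q' < q)" by force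
  obtain r where r: "q1 < r" "r < q" "secular r = 0"
    using secular_root_between_poles[OF q1(1) _ q1(2) between] q by auto
  have rR: "r \<in> regular_roots"
    using r between pole_bounds[OF q1(1)] pole_bounds[of q] q by (auto simp: regular_roots_def)
  have "next_pole r = q"
  proof (rule antisym)
    show "next_pole r \<le> q" using next_pole(3)[OF rR, of q] q r by auto
    show "q \<le> next_pole r"
      using q1_max[OF next_pole(1)[OF rR]] next_pole(2)[OF rR] r by force
  qed
  then show "q \<in> next_pole ` regular_roots" using rR by force
qed

lemma card_regular_roots: "card regular_roots + 1 = card poles"
proof -
  have "card regular_roots = card (poles - {Min poles})"
    using bij_betw_same_card[OF bij_betw_imageI[OF inj_on_next_pole next_pole_image]] .
  also have "\<dots> = card poles - 1" using finite_poles poles_nonempty by (simp add: card_Diff_singleton)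
  finally show ?thesis using finite_poles poles_nonempty by (metis Suc_eq_plus1 card_gt_0_iff Suc_pred')
qed

lemma finite_regular_roots: "finite regular_roots"
  using finite_imageD[OF _ inj_on_next_pole] finite_poles next_pole_image by simp

end

section \<open>Star graphs with Neumann leaves\<close>

locale center_star =
  fixes H :: "('v,'e) mgraph" and c :: 'v
  assumes wf: "wf_graph H" and center_in_verts: "c \<in> verts H" and edges_nonempty: "edges H \<noteq> {}"
    and star: "\<forall>e\<in>edges H. (fst (ends H e) = c \<and> snd (ends H e) \<noteq> c) \<or> (snd (ends H e) = c \<and> fst (ends H e) \<noteq> c)"
    and leaves: "\<forall>v\<in>verts H - {c}. deg H v = 1"
begin

definition leaf_end :: "'e \<Rightarrow> bool" where
  "leaf_end e = (fst (ends H e) = c)"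

definition leaf_pos :: "'e \<Rightarrow> real" where
  "leaf_pos e = (if leaf_end e then len H e else 0)"

definition some_edge :: 'e where
  "some_edge = (SOME e. e \<in> edges H)"

definition center_value :: "('e \<Rightarrow> real \<Rightarrow> real) \<Rightarrow> real" where
  "center_value h = endval H h some_edge (\<not> leaf_end some_edge)"

lemma finite_edges: "finite (edges H)"
  using wf by (simp add: wf_graph_def)

lemma len_pos: "e \<in> edges H \<Longrightarrow> len H e > 0"
  using wf by (simp add: wf_graph_def)

lemma leaf_pos_in: "e \<in> edges H \<Longrightarrow> leaf_pos e \<in> {0..len H e}"
  using len_pos[of e] by (auto simp: leaf_pos_def)

lemma some_edge_in: "some_edge \<in> edges H"
  using edges_nonempty by (simp add: some_edge_def some_in_eq)

lemma endpt_center: "e \<in> edges H \<Longrightarrow> endpt H e (\<not> leaf_end e) = c"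
  using star by (auto simp: endpt_def leaf_end_def)

lemma endpt_leaf_ne_center: "e \<in> edges H \<Longrightarrow> endpt H e (leaf_end e) \<noteq> c"
  using star by (auto simp: endpt_def leaf_end_def)

lemma endpt_in_verts: "e \<in> edges H \<Longrightarrow> endpt H e b \<in> verts H"
  using wf by (auto simp: endpt_def wf_graph_def)

lemma ends_at_center: "ends_at H c = (\<lambda>e. (e, \<not> leaf_end e)) ` edges H"
proof (intro set_eqI iffI)
  fix p assume "p \<in> ends_at H c"
  then obtain e b where p: "p = (e, b)" "e \<in> edges H" "endpt H e b = c" by (auto simp: ends_at_def)
  then have "b = (\<not> leaf_end e)" using endpt_leaf_ne_center[of e] by (cases b; cases "leaf_end e") auto
  then show "p \<in> (\<lambda>e. (e, \<not> leaf_end e)) ` edges H" using p by auto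
qed (auto simp: ends_at_def endpt_center)

lemma sum_ends_at_center: "(\<Sum>p\<in>ends_at H c. F p) = (\<Sum>e\<in>edges H. F (e, \<not> leaf_end e))"
  unfolding ends_at_center by (rule sum.reindex_cong[of "\<lambda>e. (e, \<not> leaf_end e)"]) (auto simp: inj_on_def)

lemma ends_at_leaf:
  assumes "v \<in> verts H" "v \<noteq> c"
  obtains e where "e \<in> edges H" "ends_at H v = {(e, leaf_end e)}"
proof -
  have "card (ends_at H v) = 1" using leaves assms by (auto simp: deg_def)
  then obtain p where p: "ends_at H v = {p}" by (auto simp: card_1_singleton_iff)
  then have "p \<in> ends_at H v" by simp
  then obtain e b where eb: "p = (e, b)" "e \<in> edges H" "endpt H e b = v" by (auto simp: ends_at_def)
  then have "b = leaf_end e" using endpt_center[of e] assms by (cases b; cases "leaf_end e") auto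
  then show ?thesis using that p eb by auto
qed

lemma ends_at_leaf_of_edge:
  assumes "e \<in> edges H"
  shows "ends_at H (endpt H e (leaf_end e)) = {(e, leaf_end e)}"
proof -
  obtain e' where "ends_at H (endpt H e (leaf_end e)) = {(e', leaf_end e')}"
    using ends_at_leaf[OF endpt_in_verts[OF assms] endpt_leaf_ne_center[OF assms]] by auto
  moreover have "(e, leaf_end e) \<in> ends_at H (endpt H e (leaf_end e))" using assms by (auto simp: ends_at_def)
  ultimately show ?thesis by auto
qed

lemma Dv_leaf_pos:
  assumes "solves H lam h" "e \<in> edges H"
  shows "Dv H h e (leaf_pos e) = 0"
proof -
  have "(\<Sum>p\<in>ends_at H (endpt H e (leaf_end e)). outder H h (fst p) (snd p)) = 0"
    using assms endpt_in_verts[OF assms(2)] by (auto simp: solves_def)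
  then have "outder H h e (leaf_end e) = 0" using ends_at_leaf_of_edge[OF assms(2)] by simp
  then show ?thesis by (auto simp: outder_def leaf_pos_def split: if_splits)
qed

lemma solution_eq_cos:
  assumes sol: "solves H (\<mu>\<^sup>2) h" and mu: "\<mu> \<ge> 0" and e: "e \<in> edges H" and t: "t \<in> {0..len H e}"
  shows "h e t = h e (leaf_pos e) * cos (\<mu> * (t - leaf_pos e)) \<and>
         Dv H h e t = - h e (leaf_pos e) * \<mu> * sin (\<mu> * (t - leaf_pos e))"
proof -
  have d1: "(h e has_real_derivative Dv H h e x) (at x within {0..len H e})" if "x \<in> {0..len H e}" for x
    using sol e that by (auto simp: solves_def has_real_derivative_iff_has_vector_derivative)
  have d2: "(Dv H h e has_real_derivative (- \<mu>\<^sup>2 * h e x)) (at x within {0..len H e})" if "x \<in> {0..len H e}" for x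
    using sol e that by (auto simp: solves_def has_real_derivative_iff_has_vector_derivative)
  show ?thesis
    using harmonic_ode_critical_point[OF d1 d2 _ leaf_pos_in[OF e] Dv_leaf_pos[OF sol e]] mu t by simp
qed

lemma endval_center:
  assumes "solves H (\<mu>\<^sup>2) h" "\<mu> \<ge> 0" "e \<in> edges H"
  shows "endval H h e (\<not> leaf_end e) = h e (leaf_pos e) * cos (\<mu> * len H e)"
  using solution_eq_cos[OF assms, of "if leaf_end e then 0 else len H e"] len_pos[OF assms(3)]
  by (auto simp: endval_def leaf_pos_def)

lemma outder_center:
  assumes "solves H (\<mu>\<^sup>2) h" "\<mu> \<ge> 0" "e \<in> edges H"
  shows "outder H h e (\<not> leaf_end e) = \<mu> * (h e (leaf_pos e) * sin (\<mu> * len H e))"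
  using solution_eq_cos[OF assms, of "if leaf_end e then 0 else len H e"] len_pos[OF assms(3)]
  by (auto simp: outder_def leaf_pos_def)

lemma center_value_eq:
  assumes "solves H (\<mu>\<^sup>2) h" "\<mu> \<ge> 0" "e \<in> edges H"
  shows "h e (leaf_pos e) * cos (\<mu> * len H e) = center_value h"
proof -
  have "(e, \<not> leaf_end e) \<in> ends_at H c" "(some_edge, \<not> leaf_end some_edge) \<in> ends_at H c"
    using assms(3) some_edge_in ends_at_center by auto
  then have "endval H h e (\<not> leaf_end e) = center_value h"
    using assms(1) center_in_verts unfolding solves_def center_value_def by fastforce
  then show ?thesis using endval_center[OF assms] by simp
qed

lemma kirchhoff_center:
  assumes "solves H (\<mu>\<^sup>2) h" "\<mu> > 0"
  shows "(\<Sum>e\<in>edges H. h e (leaf_pos e) * sin (\<mu> * len H e)) = 0"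
proof -
  have "(\<Sum>p\<in>ends_at H c. outder H h (fst p) (snd p)) = 0"
    using assms center_in_verts by (auto simp: solves_def)
  then have "(\<Sum>e\<in>edges H. \<mu> * (h e (leaf_pos e) * sin (\<mu> * len H e))) = 0"
    using outder_center[OF assms(1) less_imp_le[OF assms(2)]] by (simp add: sum_ends_at_center)
  then show ?thesis using assms(2) by (simp add: sum_distrib_left[symmetric])
qed

lemma star_graph: "star_graph H"
  unfolding star_graph_def using center_in_verts star leaves by blast

lemma connected: "connected_graph H"
  unfolding connected_graph_def
proof (intro conjI ballI)
  show "verts H \<noteq> {}" using center_in_verts by auto
  have to_center: "(c, w) \<in> (vadj H)\<^sup>* \<and> (w, c) \<in> (vadj H)\<^sup>*" if w: "w \<in> verts H" for w
  proof (cases "w = c")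
    case False
    then obtain e where e: "e \<in> edges H" "ends_at H w = {(e, leaf_end e)}"
      using ends_at_leaf[OF w] by blast
    then have "endpt H e (leaf_end e) = w" by (auto simp: ends_at_def)
    then have "{(c, w), (w, c)} \<subseteq> vadj H"
      using endpt_center[OF e(1)] e(1) unfolding vadj_def endpt_def by (cases "leaf_end e") auto
    then show ?thesis by auto
  qed simp
  fix u w assume "u \<in> verts H" "w \<in> verts H"
  then show "(u, w) \<in> (vadj H)\<^sup>*" using to_center by (meson rtrancl_trans)
qed

definition cos_from_leaves :: "('e \<Rightarrow> real) \<Rightarrow> real \<Rightarrow> 'e \<Rightarrow> real \<Rightarrow> real" where
  "cos_from_leaves A \<mu> e t = A e * cos (\<mu> * (t - leaf_pos e))"

lemma has_real_derivative_cos_from_leaves: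
  "(cos_from_leaves A \<mu> e has_real_derivative (- A e * \<mu> * sin (\<mu> * (t - leaf_pos e)))) (at t within S)"
  unfolding cos_from_leaves_def by (auto intro!: derivative_eq_intros)

lemma Dv_cos_from_leaves:
  assumes e: "e \<in> edges H" and t: "t \<in> {0..len H e}"
  shows "Dv H (cos_from_leaves A \<mu>) e t = - A e * \<mu> * sin (\<mu> * (t - leaf_pos e))"
  unfolding Dv_def using len_pos[OF e] t has_real_derivative_cos_from_leaves
  by (intro vector_derivative_within_closed_interval) (auto simp: has_real_derivative_iff_has_vector_derivative)

lemma outder_cos_from_leaves:
  assumes e: "e \<in> edges H"
  shows "outder H (cos_from_leaves A \<mu>) e (leaf_end e) = 0"
    and "outder H (cos_from_leaves A \<mu>) e (\<not> leaf_end e) = \<mu> * (A e * sin (\<mu> * len H e))"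
  using Dv_cos_from_leaves[OF e, of 0] Dv_cos_from_leaves[OF e, of "len H e"] len_pos[OF e]
  by (auto simp: outder_def leaf_pos_def)

lemma cos_from_leaves_ode:
  assumes e: "e \<in> edges H" and x: "x \<in> {0..len H e}"
  shows "(cos_from_leaves A \<mu> e has_vector_derivative Dv H (cos_from_leaves A \<mu>) e x) (at x within {0..len H e})"
    and "(Dv H (cos_from_leaves A \<mu>) e has_vector_derivative (- \<mu>\<^sup>2 * cos_from_leaves A \<mu> e x)) (at x within {0..len H e})"
proof -
  show "(cos_from_leaves A \<mu> e has_vector_derivative Dv H (cos_from_leaves A \<mu>) e x) (at x within {0..len H e})"
    using Dv_cos_from_leaves[OF e x] has_real_derivative_cos_from_leaves
    by (simp add: has_real_derivative_iff_has_vector_derivative)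
  have "((\<lambda>t. - A e * \<mu> * sin (\<mu> * (t - leaf_pos e))) has_real_derivative (- \<mu>\<^sup>2 * cos_from_leaves A \<mu> e x))
      (at x within {0..len H e})"
    unfolding cos_from_leaves_def by (auto intro!: derivative_eq_intros simp: power2_eq_square)
  then show "(Dv H (cos_from_leaves A \<mu>) e has_vector_derivative (- \<mu>\<^sup>2 * cos_from_leaves A \<mu> e x)) (at x within {0..len H e})"
    unfolding has_real_derivative_iff_has_vector_derivative
    by (rule has_vector_derivative_transform[OF x, rotated]) (simp add: Dv_cos_from_leaves[OF e])
qed

lemma solves_cos_from_leaves:
  assumes cont: "\<And>e e'. e \<in> edges H \<Longrightarrow> e' \<in> edges H \<Longrightarrow> A e * cos (\<mu> * len H e) = A e' * cos (\<mu> * len H e')"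
    and kirchhoff: "(\<Sum>e\<in>edges H. A e * sin (\<mu> * len H e)) = 0"
  shows "solves H (\<mu>\<^sup>2) (cos_from_leaves A \<mu>)"
  unfolding solves_def
proof (intro conjI ballI)
  show "(cos_from_leaves A \<mu> e has_vector_derivative Dv H (cos_from_leaves A \<mu>) e x) (at x within {0..len H e})"
    "(Dv H (cos_from_leaves A \<mu>) e has_vector_derivative (- \<mu>\<^sup>2 * cos_from_leaves A \<mu> e x)) (at x within {0..len H e})"
    if "e \<in> edges H" "x \<in> {0..len H e}" for e x
    using cos_from_leaves_ode[OF that] by blast+
next
  fix v p q assume v: "v \<in> verts H" and p: "p \<in> ends_at H v" and q: "q \<in> ends_at H v"
  show "endval H (cos_from_leaves A \<mu>) (fst p) (snd p) = endval H (cos_from_leaves A \<mu>) (fst q) (snd q)"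
  proof (cases "v = c")
    case True
    then obtain e e' where "p = (e, \<not> leaf_end e)" "q = (e', \<not> leaf_end e')" "e \<in> edges H" "e' \<in> edges H"
      using p q ends_at_center by auto
    then show ?thesis using cont[of e e'] by (auto simp: endval_def cos_from_leaves_def leaf_pos_def)
  next
    case False
    then show ?thesis using ends_at_leaf[OF v] p q by (metis singletonD)
  qed
next
  fix v assume v: "v \<in> verts H"
  show "(\<Sum>p\<in>ends_at H v. outder H (cos_from_leaves A \<mu>) (fst p) (snd p)) = 0"
  proof (cases "v = c")
    case True
    have "(\<Sum>e\<in>edges H. outder H (cos_from_leaves A \<mu>) e (\<not> leaf_end e)) =
        \<mu> * (\<Sum>e\<in>edges H. A e * sin (\<mu> * len H e))"
      by (simp add: outder_cos_from_leaves(2) sum_distrib_left)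
    then show ?thesis using True kirchhoff by (simp add: sum_ends_at_center)
  next
    case False
    then obtain e where "e \<in> edges H" "ends_at H v = {(e, leaf_end e)}"
      using ends_at_leaf[OF v] by blast
    then show ?thesis using outder_cos_from_leaves(1) by simp
  qed
qed

end

context center_star
begin

text \<open>The sum over a one-point set puts the formula in the shape required by mult_le_card.\<close>

lemma solution_eq_center_value:
  assumes "solves H (\<mu>\<^sup>2) h" "\<mu> \<ge> 0" "\<forall>e\<in>edges H. cos (\<mu> * len H e) \<noteq> 0"
  shows "\<forall>e\<in>edges H. \<forall>x\<in>{0..len H e}.
    h e x = (\<Sum>z\<in>{()}. center_value h * (cos (\<mu> * (x - leaf_pos e)) / cos (\<mu> * len H e)))"
  using solution_eq_cos[OF assms(1,2)] center_value_eq[OF assms(1,2)] assms(3)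
  by (simp add: field_simps)

lemma mult_le_1_off_poles:
  assumes "\<mu> \<ge> 0" "\<forall>e\<in>edges H. cos (\<mu> * len H e) \<noteq> 0"
  shows "mult H (\<mu>\<^sup>2) \<le> 1"
  using mult_le_card[OF _ solution_eq_center_value[OF _ assms]] by simp

lemma mult_ge_1_off_poles:
  assumes mu: "\<mu> \<ge> 0" and nz: "\<forall>e\<in>edges H. cos (\<mu> * len H e) \<noteq> 0"
    and secular: "(\<Sum>e\<in>edges H. tan (\<mu> * len H e)) = 0"
  shows "1 \<le> mult H (\<mu>\<^sup>2)"
proof -
  define A where "A e = 1 / cos (\<mu> * len H e)" for e
  have sol: "solves H (\<mu>\<^sup>2) (cos_from_leaves A \<mu>)"
    using nz secular by (intro solves_cos_from_leaves) (simp_all add: A_def tan_def)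
  have "is_eigenfunction H (\<mu>\<^sup>2) (cos_from_leaves A \<mu>)"
    unfolding is_eigenfunction_def
  proof (intro conjI sol bexI)
    show "cos_from_leaves A \<mu> some_edge (leaf_pos some_edge) \<noteq> 0"
      using nz some_edge_in by (simp add: cos_from_leaves_def A_def)
  qed (use some_edge_in leaf_pos_in in auto)
  from length_le_mult[OF _ solution_eq_center_value[OF _ mu nz] _ lin_indep_eigenfunction[OF this]] sol
  show ?thesis by simp
qed

lemma secular_zero_if_eigenvalue:
  assumes mu: "\<mu> > 0" and nz: "\<forall>e\<in>edges H. cos (\<mu> * len H e) \<noteq> 0"
    and eig: "eigenvalue H (\<mu>\<^sup>2)"
  shows "(\<Sum>e\<in>edges H. tan (\<mu> * len H e)) = 0"
proof -
  obtain h where h: "is_eigenfunction H (\<mu>\<^sup>2) h" using eig by (auto simp: eigenvalue_def)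
  then have sol: "solves H (\<mu>\<^sup>2) h" by (simp add: is_eigenfunction_def)
  have leaf: "h e (leaf_pos e) = center_value h / cos (\<mu> * len H e)" if "e \<in> edges H" for e
    using center_value_eq[OF sol _ that] mu nz that by (simp add: field_simps)
  have "center_value h \<noteq> 0"
  proof
    assume "center_value h = 0"
    then have "\<forall>e\<in>edges H. \<forall>x\<in>{0..len H e}. h e x = 0"
      using solution_eq_cos[OF sol] leaf mu by auto
    then show False using h by (auto simp: is_eigenfunction_def)
  qed
  have "0 = (\<Sum>e\<in>edges H. h e (leaf_pos e) * sin (\<mu> * len H e))"
    using kirchhoff_center[OF sol mu] by simp
  also have "\<dots> = center_value h * (\<Sum>e\<in>edges H. tan (\<mu> * len H e))"
    unfolding sum_distrib_left by (rule sum.cong) (auto simp: leaf tan_def)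
  finally show ?thesis using \<open>center_value h \<noteq> 0\<close> by simp
qed

definition cos_zero_edges :: "real \<Rightarrow> 'e set" where
  "cos_zero_edges q = {e\<in>edges H. cos (q * len H e) = 0}"

end

text \<open>At a pole q, i.e. when cos (q len e) = 0 for some edge e, every solution vanishes at
  the centre, hence on all edges outside cos_zero_edges q, and the Kirchhoff condition says that
  its leaf values on cos_zero_edges q sum to zero.  So the solution space is spanned by the
  differences of the leaf-centred cosines on two such edges.\<close>

locale center_star_pole = center_star H c for H :: "('v,'e) mgraph" and c +
  fixes q :: real
  assumes q_pos: "q > 0" and cos_zero_edges_nonempty: "cos_zero_edges q \<noteq> {}"
    and sin_cos_zero_edges: "\<And>e. e \<in> cos_zero_edges q \<Longrightarrow> sin (q * len H e) = 1"
begin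

definition base_edge :: 'e where
  "base_edge = (SOME e. e \<in> cos_zero_edges q)"

lemma base_edge_in: "base_edge \<in> cos_zero_edges q"
  using cos_zero_edges_nonempty by (simp add: base_edge_def some_in_eq)

lemma finite_cos_zero_edges: "finite (cos_zero_edges q)"
  using finite_edges by (simp add: cos_zero_edges_def)

lemma leaf_value_zero_outside_cos_zero_edges:
  assumes h: "solves H (q\<^sup>2) h" and e: "e \<in> edges H" "e \<notin> cos_zero_edges q"
  shows "h e (leaf_pos e) = 0"
proof -
  have "h e (leaf_pos e) * cos (q * len H e) = h base_edge (leaf_pos base_edge) * cos (q * len H base_edge)"
    using center_value_eq[OF h _ e(1)] center_value_eq[OF h, of base_edge] base_edge_in q_pos
    by (simp add: cos_zero_edges_def)
  also have "\<dots> = 0" using base_edge_in by (simp add: cos_zero_edges_def)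
  finally show ?thesis using e by (simp add: cos_zero_edges_def)
qed

lemma sum_leaf_values_cos_zero_edges:
  assumes h: "solves H (q\<^sup>2) h"
  shows "(\<Sum>e\<in>cos_zero_edges q. h e (leaf_pos e)) = 0"
proof -
  have "0 = (\<Sum>e\<in>edges H. h e (leaf_pos e) * sin (q * len H e))"
    using kirchhoff_center[OF h q_pos] by simp
  also have "\<dots> = (\<Sum>e\<in>cos_zero_edges q. h e (leaf_pos e) * sin (q * len H e))"
    using leaf_value_zero_outside_cos_zero_edges[OF h]
    by (intro sum.mono_neutral_right) (auto simp: finite_edges cos_zero_edges_def)
  also have "\<dots> = (\<Sum>e\<in>cos_zero_edges q. h e (leaf_pos e))" using sin_cos_zero_edges by simp
  finally show ?thesis by simp
qed

lemma solution_eq_pole_combination: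
  assumes h: "solves H (q\<^sup>2) h"
  shows "\<forall>e\<in>edges H. \<forall>x\<in>{0..len H e}. h e x = (\<Sum>z\<in>cos_zero_edges q - {base_edge}. h z (leaf_pos z) *
      ((if z = e then cos (q * (x - leaf_pos e)) else 0) + (if e = base_edge then - cos (q * (x - leaf_pos e)) else 0)))"
proof (intro ballI)
  fix e x assume e: "e \<in> edges H" and x: "x \<in> {0..len H e}"
  let ?z = base_edge and ?C = "cos (q * (x - leaf_pos e))"
  note zero = leaf_value_zero_outside_cos_zero_edges[OF h] and sum0 = sum_leaf_values_cos_zero_edges[OF h]
  have hx: "h e x = h e (leaf_pos e) * ?C" using solution_eq_cos[OF h _ e x] q_pos by simp
  show "h e x = (\<Sum>z\<in>cos_zero_edges q - {?z}. h z (leaf_pos z) * ((if z = e then ?C else 0) + (if e = ?z then - ?C else 0)))"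
  proof (cases "e = ?z")
    case True
    have "(\<Sum>z\<in>cos_zero_edges q - {?z}. h z (leaf_pos z) * ((if z = e then ?C else 0) + (if e = ?z then - ?C else 0)))
        = - (\<Sum>z\<in>cos_zero_edges q - {?z}. h z (leaf_pos z)) * ?C"
      using True by (simp add: sum_distrib_right sum_negf)
    also have "(\<Sum>z\<in>cos_zero_edges q - {?z}. h z (leaf_pos z)) = - h ?z (leaf_pos ?z)"
      using sum0 sum.remove[OF finite_cos_zero_edges base_edge_in, of "\<lambda>e. h e (leaf_pos e)"] by simp
    finally show ?thesis using hx True by simp
  next
    case False
    have "(\<Sum>z\<in>cos_zero_edges q - {?z}. h z (leaf_pos z) * ((if z = e then ?C else 0) + (if e = ?z then - ?C else 0)))
        = (\<Sum>z\<in>cos_zero_edges q - {?z}. if z = e then h e (leaf_pos e) * ?C else 0)"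
      using False by (intro sum.cong) auto
    also have "\<dots> = h e x"
      using finite_cos_zero_edges hx zero[OF e] False by (simp add: sum.delta')
    finally show ?thesis by simp
  qed
qed

lemma mult_le_at_pole: "mult H (q\<^sup>2) \<le> card (cos_zero_edges q) - 1"
  using mult_le_card[OF _ solution_eq_pole_combination] finite_cos_zero_edges base_edge_in
  by (simp add: card_Diff_singleton)

definition pole_mode :: "'e \<Rightarrow> 'e \<Rightarrow> real" where
  "pole_mode z e = (if e = z then 1 else 0) - (if e = base_edge then 1 else 0)"

lemma solves_pole_mode:
  assumes z: "z \<in> cos_zero_edges q"
  shows "solves H (q\<^sup>2) (cos_from_leaves (pole_mode z) q)"
proof (rule solves_cos_from_leaves)
  have vanish: "pole_mode z e * cos (q * len H e) = 0" for e
    using z base_edge_in by (auto simp: pole_mode_def cos_zero_edges_def)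
  then show "\<And>e e'. pole_mode z e * cos (q * len H e) = pole_mode z e' * cos (q * len H e')"
    by (simp only: vanish)
  have zE: "z \<in> edges H" "base_edge \<in> edges H" using z base_edge_in by (auto simp: cos_zero_edges_def)
  have "(\<Sum>e\<in>edges H. pole_mode z e * sin (q * len H e)) =
        (\<Sum>e\<in>edges H. if e = z then sin (q * len H e) else 0) - (\<Sum>e\<in>edges H. if e = base_edge then sin (q * len H e) else 0)"
    unfolding sum_subtractf[symmetric] by (rule sum.cong) (simp_all add: pole_mode_def left_diff_distrib)
  also have "\<dots> = 0"
    using zE finite_edges sin_cos_zero_edges[OF z] sin_cos_zero_edges[OF base_edge_in] by (simp add: sum.delta')
  finally show "(\<Sum>e\<in>edges H. pole_mode z e * sin (q * len H e)) = 0" .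
qed

lemma lin_indep_pole_modes:
  assumes zs: "set zs = cos_zero_edges q - {base_edge}" "distinct zs"
  shows "lin_indep H (map (\<lambda>z. cos_from_leaves (pole_mode z) q) zs)"
  unfolding lin_indep_def
proof (rule allI, rule impI, rule allI, rule impI)
  let ?gs = "map (\<lambda>z. cos_from_leaves (pole_mode z) q) zs"
  fix cc :: "nat \<Rightarrow> real" and j
  assume vanish: "\<forall>e\<in>edges H. \<forall>x\<in>{0..len H e}. (\<Sum>i<length ?gs. cc i * (?gs ! i) e x) = 0"
    and j: "j < length ?gs"
  let ?e = "zs ! j"
  have ej: "?e \<in> cos_zero_edges q - {base_edge}" using nth_mem[of j zs] j zs(1) by simp
  then have eE: "?e \<in> edges H" by (auto simp: cos_zero_edges_def)
  have "(?gs ! i) ?e (leaf_pos ?e) = (if i = j then 1 else 0)" if i: "i < length ?gs" for i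
    using ej nth_eq_iff_index_eq[OF zs(2), of j i] i j by (simp add: cos_from_leaves_def pole_mode_def)
  then have "(\<Sum>i<length ?gs. cc i * (?gs ! i) ?e (leaf_pos ?e)) = (\<Sum>i<length ?gs. if i = j then cc i else 0)"
    by (intro sum.cong) auto
  also have "\<dots> = cc j" using j by simp
  finally show "cc j = 0" using vanish eE leaf_pos_in[OF eE] by simp
qed

lemma mult_ge_at_pole: "card (cos_zero_edges q) - 1 \<le> mult H (q\<^sup>2)"
proof -
  obtain zs where zs: "set zs = cos_zero_edges q - {base_edge}" "distinct zs"
    using finite_distinct_list finite_cos_zero_edges by (metis finite_Diff)
  let ?gs = "map (\<lambda>z. cos_from_leaves (pole_mode z) q) zs"
  have "length ?gs \<le> mult H (q\<^sup>2)"
    using solves_pole_mode zs(1) lin_indep_pole_modes[OF zs] finite_cos_zero_edges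
    by (intro length_le_mult[OF _ solution_eq_pole_combination]) auto
  moreover have "length ?gs = card (cos_zero_edges q) - 1"
    using zs finite_cos_zero_edges base_edge_in by (simp add: distinct_card[symmetric] card_Diff_singleton)
  ultimately show ?thesis by simp
qed

lemma mult_at_pole: "mult H (q\<^sup>2) = card (cos_zero_edges q) - 1"
  using mult_le_at_pole mult_ge_at_pole by (rule antisym)

end

section \<open>Spectrum and nodal count of a Neumann star\<close>

locale star_eigenfunction = center_star H c for H :: "('v,'e) mgraph" and c +
  fixes k :: real and g :: "'e \<Rightarrow> real \<Rightarrow> real"
  assumes k_pos: "k > 0" and solves_g: "solves H (k\<^sup>2) g"
    and endval_g_nonzero: "\<forall>e\<in>edges H. \<forall>b. endval H g e b \<noteq> 0"
    and Dv_g_nonzero: "\<forall>e\<in>edges H. \<forall>t. 0 < t \<and> t < len H e \<longrightarrow> Dv H g e t \<noteq> 0"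
begin

lemma g_leaf_nonzero: "e \<in> edges H \<Longrightarrow> g e (leaf_pos e) \<noteq> 0"
  using endval_g_nonzero by (force simp: endval_def leaf_pos_def)

lemma g_eq_cos: "e \<in> edges H \<Longrightarrow> t \<in> {0..len H e} \<Longrightarrow>
   g e t = g e (leaf_pos e) * cos (k * (t - leaf_pos e)) \<and> Dv H g e t = - g e (leaf_pos e) * k * sin (k * (t - leaf_pos e))"
  using solution_eq_cos[OF solves_g] k_pos by simp

text \<open>Otherwise the derivative would vanish at distance pi/k from the leaf.\<close>

lemma k_len_le_pi: "e \<in> edges H \<Longrightarrow> k * len H e \<le> pi"
proof (rule ccontr)
  assume e: "e \<in> edges H" and "\<not> k * len H e \<le> pi"
  then have big: "pi / k < len H e" using k_pos by (simp add: field_simps)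
  define t where "t = (if leaf_end e then len H e - pi / k else pi / k)"
  have t: "0 < t" "t < len H e" using big k_pos by (auto simp: t_def)
  have "k * (t - leaf_pos e) = (if leaf_end e then - pi else pi)"
    using k_pos by (auto simp: t_def leaf_pos_def field_simps)
  then have "Dv H g e t = 0" using g_eq_cos[OF e, of t] t by simp
  then show False using Dv_g_nonzero e t by auto
qed

lemma cos_k_len_nonzero: "e \<in> edges H \<Longrightarrow> cos (k * len H e) \<noteq> 0"
  using endval_center[OF solves_g _ , of e] endval_g_nonzero k_pos by force

lemma secular_k_eq_0: "(\<Sum>e\<in>edges H. tan (k * len H e)) = 0"
  using secular_zero_if_eigenvalue[OF k_pos] cos_k_len_nonzero solves_g endval_g_nonzero
    some_edge_in leaf_pos_in g_leaf_nonzero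
  unfolding eigenvalue_def is_eigenfunction_def by blast

end

sublocale star_eigenfunction \<subseteq> star_secular "edges H" "len H" k
  using finite_edges edges_nonempty len_pos k_pos k_len_le_pi cos_k_len_nonzero secular_k_eq_0
  by unfold_locales auto

context star_eigenfunction
begin

lemma mult_k: "mult H (k\<^sup>2) = 1"
  using mult_le_1_off_poles[of k] mult_ge_1_off_poles[of k] k_pos cos_k_len_nonzero secular_k_eq_0
  by (auto intro: antisym)

lemma mult_0: "mult H 0 = 1"
  using mult_le_1_off_poles[of 0] mult_ge_1_off_poles[of 0] by (auto intro: antisym)

lemma mult_regular_root: "r \<in> regular_roots \<Longrightarrow> mult H (r\<^sup>2) = 1"
  using mult_le_1_off_poles[of r] mult_ge_1_off_poles[of r] cos_nonzero_off_poles[of r]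
  by (auto simp: regular_roots_def secular_def intro: antisym)

lemma mult_pole: 
  assumes q: "q \<in> poles"
  shows "mult H (q\<^sup>2) = card (pole_edges q) - 1"
proof -
  have same: "cos_zero_edges q = pole_edges q" by (simp add: cos_zero_edges_def pole_edges_def)
  interpret P: center_star_pole H c q
  proof
    show "q > 0" using pole_bounds[OF q] by simp
    show "cos_zero_edges q \<noteq> {}" using pole_edges_nonempty[OF q] same by simp
    show "sin (q * len H e) = 1" if "e \<in> cos_zero_edges q" for e
      using pole_edges_at_pole[OF q, of e] that same by (metis sin_pi_half)
  qed
  show ?thesis using P.mult_at_pole same by simp
qed

lemma eigenvalues_below_k:
  "{lam. 0 \<le> lam \<and> lam < k\<^sup>2 \<and> eigenvalue H lam} \<subseteq> (\<lambda>\<mu>. \<mu>\<^sup>2) ` insert 0 (poles \<union> regular_roots)"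
proof
  fix lam assume "lam \<in> {lam. 0 \<le> lam \<and> lam < k\<^sup>2 \<and> eigenvalue H lam}"
  then have lam: "0 \<le> lam" "lam < k\<^sup>2" "eigenvalue H lam" by auto
  define \<mu> where "\<mu> = sqrt lam"
  have lam_eq: "lam = \<mu>\<^sup>2" using lam by (simp add: \<mu>_def)
  have \<mu>: "0 \<le> \<mu>" "\<mu> < k" using lam k_pos by (auto simp: \<mu>_def real_sqrt_less_iff intro: real_less_lsqrt)
  have "\<mu> \<in> regular_roots" if "0 < \<mu>" "\<mu> \<notin> poles"
  proof -
    have "\<forall>e\<in>edges H. cos (\<mu> * len H e) \<noteq> 0" using cos_nonzero_off_poles that \<mu> by auto
    then have "secular \<mu> = 0"
      using secular_zero_if_eigenvalue[OF \<open>0 < \<mu>\<close>] lam lam_eq by (simp add: secular_def)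
    then show ?thesis using that \<mu> by (auto simp: regular_roots_def)
  qed
  then have "\<mu> \<in> insert 0 (poles \<union> regular_roots)" using \<mu> by force
  then show "lam \<in> (\<lambda>\<mu>. \<mu>\<^sup>2) ` insert 0 (poles \<union> regular_roots)" using lam_eq by auto
qed

lemma Ncount_eq_sum: "Ncount H k = (\<Sum>\<mu>\<in>insert 0 (poles \<union> regular_roots). mult H (\<mu>\<^sup>2))"
proof -
  let ?T = "insert 0 (poles \<union> regular_roots)"
  have T: "0 \<le> \<mu> \<and> \<mu> < k" if "\<mu> \<in> ?T" for \<mu>
    using that k_pos by (auto simp: poles_def regular_roots_def)
  have "Ncount H k = (\<Sum>lam\<in>(\<lambda>\<mu>. \<mu>\<^sup>2) ` ?T. mult H lam)"
    unfolding Ncount_def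
  proof (rule sum.mono_neutral_left[OF _ eigenvalues_below_k])
    show "finite ((\<lambda>\<mu>. \<mu>\<^sup>2) ` ?T)" using finite_poles finite_regular_roots by simp
    show "\<forall>lam\<in>(\<lambda>\<mu>. \<mu>\<^sup>2) ` ?T - {lam. 0 \<le> lam \<and> lam < k\<^sup>2 \<and> eigenvalue H lam}. mult H lam = 0"
    proof
      fix lam assume "lam \<in> (\<lambda>\<mu>. \<mu>\<^sup>2) ` ?T - {lam. 0 \<le> lam \<and> lam < k\<^sup>2 \<and> eigenvalue H lam}"
      then obtain \<mu> where "\<mu> \<in> ?T" "lam = \<mu>\<^sup>2" "\<not> eigenvalue H lam \<or> \<not> lam < k\<^sup>2" by auto
      moreover have "\<mu>\<^sup>2 < k\<^sup>2" using T[OF \<open>\<mu> \<in> ?T\<close>] by (auto intro: power_strict_mono)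
      ultimately show "mult H lam = 0" using mult_eq_0_if_not_eigenvalue by auto
    qed
  qed
  also have "\<dots> = (\<Sum>\<mu>\<in>?T. mult H (\<mu>\<^sup>2))"
  proof (rule sum.reindex[unfolded comp_def])
    show "inj_on (\<lambda>\<mu>. \<mu>\<^sup>2) ?T" by (intro inj_onI) (metis T power2_eq_iff_nonneg)
  qed
  finally show ?thesis .
qed

lemma Ncount_eq: "Ncount H k = card {e\<in>edges H. pi/2 < k * len H e}"
proof -
  have "0 \<notin> poles \<union> regular_roots" "poles \<inter> regular_roots = {}"
    by (auto simp: poles_def regular_roots_def)
  then have "Ncount H k = mult H 0 + (\<Sum>q\<in>poles. mult H (q\<^sup>2)) + (\<Sum>r\<in>regular_roots. mult H (r\<^sup>2))"
    using finite_poles finite_regular_roots by (simp add: Ncount_eq_sum sum.union_disjoint)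
  also have "\<dots> = 1 + (\<Sum>q\<in>poles. card (pole_edges q) - 1) + card regular_roots"
    using mult_0 mult_pole mult_regular_root by simp
  also have "\<dots> = (\<Sum>q\<in>poles. card (pole_edges q))"
  proof -
    have "(\<Sum>q\<in>poles. card (pole_edges q)) = (\<Sum>q\<in>poles. (card (pole_edges q) - 1) + 1)"
      using pole_edges_nonempty finite_pole_edges
      by (intro sum.cong) (auto simp: Suc_le_eq card_gt_0_iff)
    also have "\<dots> = (\<Sum>q\<in>poles. card (pole_edges q) - 1) + card poles" by (subst sum.distrib) simp
    finally show ?thesis using card_regular_roots by simp
  qed
  also have "\<dots> = card {e\<in>edges H. pi/2 < k * len H e}" by (rule sum_card_pole_edges)
  finally show ?thesis .
qed

lemma g_zero_iff:
  assumes e: "e \<in> edges H" and t: "0 < t" "t < len H e"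
  shows "g e t = 0 \<longleftrightarrow> k * \<bar>t - leaf_pos e\<bar> = pi/2"
proof -
  have "\<bar>t - leaf_pos e\<bar> \<le> len H e" using t by (auto simp: leaf_pos_def)
  then have "k * \<bar>t - leaf_pos e\<bar> \<le> k * len H e" using k_pos by (intro mult_left_mono) auto
  then have bounds: "0 \<le> k * \<bar>t - leaf_pos e\<bar>" "k * \<bar>t - leaf_pos e\<bar> \<le> pi"
    using k_len_le_pi[OF e] k_pos by (simp, linarith)
  have "k * \<bar>t - leaf_pos e\<bar> = \<bar>k * (t - leaf_pos e)\<bar>" using k_pos by (simp add: abs_mult)
  then have "g e t = g e (leaf_pos e) * cos (k * \<bar>t - leaf_pos e\<bar>)"
    using g_eq_cos[OF e, of t] t by simp
  moreover have "cos (k * \<bar>t - leaf_pos e\<bar>) = 0 \<longleftrightarrow> k * \<bar>t - leaf_pos e\<bar> = pi/2"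
  proof
    assume "cos (k * \<bar>t - leaf_pos e\<bar>) = 0"
    then show "k * \<bar>t - leaf_pos e\<bar> = pi/2" using cos_inj_pi[OF bounds, of "pi/2"] by simp
  next
    assume h: "k * \<bar>t - leaf_pos e\<bar> = pi/2"
    show "cos (k * \<bar>t - leaf_pos e\<bar>) = 0" unfolding h by (rule cos_pi_half)
  qed
  ultimately show ?thesis using g_leaf_nonzero[OF e] by simp
qed

lemma zeros_on_edge:
  assumes e: "e \<in> edges H"
  shows "{t. 0 < t \<and> t < len H e \<and> g e t = 0} =
     (if pi/2 < k * len H e then {if leaf_end e then len H e - pi / (2 * k) else pi / (2 * k)} else {})"
proof -
  define z where "z = (if leaf_end e then len H e - pi / (2 * k) else pi / (2 * k))"
  have zero_iff: "g e t = 0 \<longleftrightarrow> t = z" if t: "0 < t" "t < len H e" for t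
  proof -
    have "k * \<bar>t - leaf_pos e\<bar> = pi/2 \<longleftrightarrow> t = z"
    proof (cases "leaf_end e")
      case True
      then have dist: "\<bar>t - leaf_pos e\<bar> = len H e - t" using t by (simp add: leaf_pos_def)
      show ?thesis unfolding dist using True k_pos by (auto simp: z_def field_simps)
    next
      case False
      then have dist: "\<bar>t - leaf_pos e\<bar> = t" using t by (simp add: leaf_pos_def)
      show ?thesis unfolding dist using False k_pos by (auto simp: z_def field_simps)
    qed
    then show ?thesis using g_zero_iff[OF e t] by simp
  qed
  have "pi / (2 * k) < len H e \<longleftrightarrow> pi/2 < k * len H e" using k_pos by (simp add: field_simps)
  moreover have "0 < pi / (2 * k)" using k_pos by simp
  ultimately have "0 < z \<and> z < len H e \<longleftrightarrow> pi/2 < k * len H e" by (auto simp: z_def)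
  then show ?thesis unfolding z_def[symmetric] using zero_iff by auto
qed

lemma nodal_count_eq: "nodal_count H g = card {e\<in>edges H. pi/2 < k * len H e}"
proof -
  have "{(e, x). e \<in> edges H \<and> 0 < x \<and> x < len H e \<and> g e x = 0} =
        Sigma (edges H) (\<lambda>e. {t. 0 < t \<and> t < len H e \<and> g e t = 0})" by auto
  then have "nodal_count H g = (\<Sum>e\<in>edges H. card {t. 0 < t \<and> t < len H e \<and> g e t = 0})"
    unfolding nodal_count_def using finite_edges zeros_on_edge by (simp add: card_SigmaI)
  also have "\<dots> = (\<Sum>e\<in>edges H. if pi/2 < k * len H e then 1 else 0)"
    using zeros_on_edge by (intro sum.cong) auto
  also have "\<dots> = card {e\<in>edges H. pi/2 < k * len H e}"
    using finite_edges by (simp add: sum.If_cases Int_def)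
  finally show ?thesis .
qed

theorem Ncount_eq_nodal_count: "Ncount H k = nodal_count H g"
  using Ncount_eq nodal_count_eq by simp

end

section \<open>Neumann points of a high-frequency eigenfunction\<close>

locale high_frequency_eigenfunction =
  fixes G :: "('v,'e) mgraph" and f :: "'e \<Rightarrow> real \<Rightarrow> real" and k :: real
  assumes standard: "standard_graph G" and generic: "generic_eigenfunction G (k\<^sup>2) f"
    and k_gt: "k > pi / Lmin G"
begin

lemma wf_G: "wf_graph G"
  using standard by (simp add: standard_graph_def)

lemma finite_edges_G: "finite (edges G)"
  using wf_G by (simp add: wf_graph_def)

lemma len_G_pos: "e \<in> edges G \<Longrightarrow> len G e > 0"
  using wf_G by (simp add: wf_graph_def)

lemma solves_f: "solves G (k\<^sup>2) f"
  using generic by (simp add: generic_eigenfunction_def is_eigenfunction_def)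

lemma edges_G_nonempty: "edges G \<noteq> {}"
  using generic by (auto simp: generic_eigenfunction_def is_eigenfunction_def)

lemma endpt_G_in_verts: "e \<in> edges G \<Longrightarrow> endpt G e b \<in> verts G"
  using wf_G by (auto simp: wf_graph_def endpt_def)

lemma endval_f_nonzero: "e \<in> edges G \<Longrightarrow> endval G f e b \<noteq> 0"
  using generic endpt_G_in_verts[of e b] by (auto simp: generic_eigenfunction_def ends_at_def)

lemma f_0_nonzero: "e \<in> edges G \<Longrightarrow> f e 0 \<noteq> 0"
  using endval_f_nonzero[of e False] by (simp add: endval_def)

lemma Lmin_pos: "Lmin G > 0"
proof -
  have "Lmin G \<in> len G ` edges G"
    unfolding Lmin_def using finite_edges_G edges_G_nonempty by (intro Min_in) auto
  then show ?thesis using len_G_pos by auto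
qed

lemma k_pos: "k > 0"
  using k_gt Lmin_pos by (smt (verit) divide_pos_pos pi_gt_zero)

lemma pi_div_k_less_len: "e \<in> edges G \<Longrightarrow> pi / k < len G e"
proof -
  assume e: "e \<in> edges G"
  have "Lmin G \<le> len G e" using e finite_edges_G by (simp add: Lmin_def)
  then have "pi / len G e \<le> pi / Lmin G" using Lmin_pos by (intro divide_left_mono) auto
  then have "pi / len G e < k" using k_gt by simp
  then show ?thesis using len_G_pos[OF e] k_pos by (simp add: field_simps)
qed

lemma f_has_derivative:
  "e \<in> edges G \<Longrightarrow> t \<in> {0..len G e} \<Longrightarrow> (f e has_real_derivative Dv G f e t) (at t within {0..len G e})"
  using solves_f by (auto simp: solves_def has_real_derivative_iff_has_vector_derivative)

lemma Dv_f_has_derivative: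
  "e \<in> edges G \<Longrightarrow> t \<in> {0..len G e} \<Longrightarrow> (Dv G f e has_real_derivative (- (k\<^sup>2) * f e t)) (at t within {0..len G e})"
  using solves_f by (auto simp: solves_def has_real_derivative_iff_has_vector_derivative)

lemma f_nonzero_at_critical_point:
  assumes e: "e \<in> edges G" and x: "x \<in> {0..len G e}" and crit: "Dv G f e x = 0"
  shows "f e x \<noteq> 0"
proof
  assume "f e x = 0"
  then have "\<forall>t\<in>{0..len G e}. f e t = 0 \<and> Dv G f e t = 0"
    using harmonic_ode_zero[OF f_has_derivative[OF e] Dv_f_has_derivative[OF e] _ x _ crit] by simp
  then show False using f_0_nonzero[OF e] len_G_pos[OF e] by auto
qed

lemma Dv_f_eq:
  assumes e: "e \<in> edges G" and t: "t \<in> {0..len G e}"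
  shows "Dv G f e t = - f e 0 * k * sin (k * t) + Dv G f e 0 * cos (k * t)"
  using harmonic_ode_solution[OF f_has_derivative[OF e] Dv_f_has_derivative[OF e] k_pos
      less_imp_le[OF len_G_pos[OF e]]] t
  by blast

text \<open>The derivative changes sign over any interval of length pi/k, and every edge is longer.\<close>

lemma exists_critical_point:
  assumes e: "e \<in> edges G"
  obtains x where "0 < x" "x < len G e" "Dv G f e x = 0"
proof -
  define D where "D t = - f e 0 * k * sin (k * t) + Dv G f e 0 * cos (k * t)" for t
  define t1 where "t1 = (len G e - pi / k) / 2"
  define t2 where "t2 = t1 + pi / k"
  have t: "0 < t1" "t1 < t2" "t2 < len G e"
    using pi_div_k_less_len[OF e] k_pos by (simp_all add: t1_def t2_def field_simps)
  have "k * t2 = k * t1 + pi" using k_pos by (simp add: t2_def field_simps)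
  then have anti: "D t2 = - D t1" by (simp add: D_def)
  have cont: "continuous_on {t1..t2} D" unfolding D_def by (intro continuous_intros)
  obtain x where x: "t1 \<le> x" "x \<le> t2" "D x = 0"
  proof (cases "D t1 \<le> 0")
    case True
    then show ?thesis using IVT'[of D t1 0 t2] anti cont t that by auto
  next
    case False
    then show ?thesis using IVT2'[of D t2 0 t1] anti cont t that by auto
  qed
  have "Dv G f e x = 0" using x t Dv_f_eq[OF e, of x] by (simp add: D_def)
  then show ?thesis using x t by (intro that[of x]) auto
qed

lemma critical_points_separated:
  assumes e: "e \<in> edges G" and x: "x \<in> {0..len G e}" and y: "y \<in> {0..len G e}"
    and dx: "Dv G f e x = 0" and dy: "Dv G f e y = 0" and xy: "x < y"
  shows "pi / k \<le> y - x"
proof (rule ccontr)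
  assume "\<not> pi / k \<le> y - x"
  then have "k * (y - x) < pi" using k_pos by (simp add: field_simps)
  moreover have "0 < k * (y - x)" using k_pos xy by simp
  ultimately have s: "sin (k * (y - x)) \<noteq> 0" by (metis sin_gt_zero less_irrefl)
  define \<alpha> where "\<alpha> = f e 0 * k"
  define \<beta> where "\<beta> = Dv G f e 0"
  have ex: "\<beta> * cos (k * x) = \<alpha> * sin (k * x)" using Dv_f_eq[OF e x] dx by (simp add: \<alpha>_def \<beta>_def)
  have ey: "\<beta> * cos (k * y) = \<alpha> * sin (k * y)" using Dv_f_eq[OF e y] dy by (simp add: \<alpha>_def \<beta>_def)
  have "\<alpha> * sin (k * (y - x)) = (\<alpha> * sin (k * y)) * cos (k * x) - cos (k * y) * (\<alpha> * sin (k * x))"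
    by (simp add: right_diff_distrib sin_diff algebra_simps)
  also have "\<dots> = 0" by (simp add: ex[symmetric] ey[symmetric] algebra_simps)
  finally have "\<alpha> = 0" using s by simp
  then show False using f_0_nonzero[OF e] k_pos by (simp add: \<alpha>_def)
qed

definition edge_neumann_pts :: "'e \<Rightarrow> real set" where
  "edge_neumann_pts e = {x. 0 < x \<and> x < len G e \<and> Dv G f e x = 0}"

text \<open>Distinct Neumann points lie in distinct intervals [n pi/k, (n+1) pi/k).\<close>

lemma finite_edge_neumann_pts:
  assumes e: "e \<in> edges G"
  shows "finite (edge_neumann_pts e)"
proof -
  define \<phi> where "\<phi> x = nat \<lfloor>x * k / pi\<rfloor>" for x
  have "inj_on \<phi> (edge_neumann_pts e)"
  proof (rule inj_onI, rule ccontr)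
    fix x y assume x: "x \<in> edge_neumann_pts e" and y: "y \<in> edge_neumann_pts e"
      and eq: "\<phi> x = \<phi> y" and ne: "x \<noteq> y"
    have "0 \<le> \<lfloor>x * k / pi\<rfloor>" "0 \<le> \<lfloor>y * k / pi\<rfloor>" using x y k_pos by (auto simp: edge_neumann_pts_def)
    then have "\<lfloor>x * k / pi\<rfloor> = \<lfloor>y * k / pi\<rfloor>" using eq unfolding \<phi>_def by (metis eq_nat_nat_iff)
    then have "\<bar>x * k / pi - y * k / pi\<bar> < 1" by linarith
    moreover have "\<bar>x * k / pi - y * k / pi\<bar> = \<bar>x - y\<bar> * k / pi"
      using k_pos by (simp add: abs_mult diff_divide_distrib[symmetric] left_diff_distrib[symmetric])
    ultimately have "\<bar>x - y\<bar> < pi / k" using k_pos by (simp add: field_simps)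
    moreover have "pi / k \<le> \<bar>x - y\<bar>"
      using critical_points_separated[OF e, of x y] critical_points_separated[OF e, of y x] x y ne
      by (cases "x < y") (auto simp: edge_neumann_pts_def)
    ultimately show False by simp
  qed
  moreover have "\<phi> ` edge_neumann_pts e \<subseteq> {..nat \<lfloor>len G e * k / pi\<rfloor>}"
  proof
    fix n assume "n \<in> \<phi> ` edge_neumann_pts e"
    then obtain x where x: "x \<in> edge_neumann_pts e" "n = \<phi> x" by auto
    then have "x * k / pi \<le> len G e * k / pi" using k_pos by (auto simp: edge_neumann_pts_def divide_right_mono)
    then show "n \<in> {..nat \<lfloor>len G e * k / pi\<rfloor>}" using x by (auto simp: \<phi>_def intro: nat_mono floor_mono)
  qed
  ultimately show ?thesis by (metis finite_atMost finite_imageD finite_subset)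
qed

lemma cutpts_eq: "cutpts G f e = {0, len G e} \<union> (if e \<in> edges G then edge_neumann_pts e else {})"
  by (auto simp: cutpts_def neumann_pts_def edge_neumann_pts_def)

lemma finite_cutpts: "e \<in> edges G \<Longrightarrow> finite (cutpts G f e)"
  using finite_edge_neumann_pts by (simp add: cutpts_eq)

lemma cutpts_bounds: "e \<in> edges G \<Longrightarrow> y \<in> cutpts G f e \<Longrightarrow> 0 \<le> y \<and> y \<le> len G e"
  using len_G_pos[of e] by (auto simp: cutpts_eq edge_neumann_pts_def)

end

section \<open>Cutting the graph at the Neumann points\<close>

lemma has_vector_derivative_shift:
  fixes F :: "real \<Rightarrow> real"
  assumes d: "(F has_vector_derivative D) (at (a + t) within {0..L})"
    and ab: "0 \<le> a" "a < b" "b \<le> L" and t: "t \<in> {0..b - a}"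
  shows "((\<lambda>s. F (a + s)) has_vector_derivative D) (at t within {0..b - a})"
proof -
  have d1: "((\<lambda>s. a + s) has_vector_derivative 1) (at t within {0..b - a})"
    by (auto intro!: derivative_eq_intros)
  have "(\<lambda>s. a + s) ` {0..b - a} \<subseteq> {0..L}" using ab by auto
  then have d2: "(F has_vector_derivative D) (at ((\<lambda>s. a + s) t) within (\<lambda>s. a + s) ` {0..b - a})"
    using has_vector_derivative_within_subset[OF d] by simp
  show ?thesis using vector_diff_chain_within[OF d1 d2] by (simp add: o_def)
qed

context high_frequency_eigenfunction
begin

lemma mem_pieces_iff:
  "(e, a, b) \<in> pieces G f \<longleftrightarrow> e \<in> edges G \<and> a \<in> cutpts G f e \<and> b \<in> cutpts G f e \<and> a < b \<and>
     (\<forall>y\<in>cutpts G f e. \<not> (a < y \<and> y < b))"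
  by (simp add: pieces_def)

lemma pieces_bounds: "(e, a, b) \<in> pieces G f \<Longrightarrow> e \<in> edges G \<and> 0 \<le> a \<and> a < b \<and> b \<le> len G e"
  using cutpts_bounds by (auto simp: mem_pieces_iff)

lemma finite_pieces: "finite (pieces G f)"
proof (rule finite_subset)
  show "pieces G f \<subseteq> Sigma (edges G) (\<lambda>e. cutpts G f e \<times> cutpts G f e)"
    by (auto simp: mem_pieces_iff)
qed (use finite_edges_G finite_cutpts in auto)

lemma Dv_f_nonzero_in_piece:
  assumes p: "(e, a, b) \<in> pieces G f" and x: "a < x" "x < b"
  shows "Dv G f e x \<noteq> 0"
proof
  assume "Dv G f e x = 0"
  then have "x \<in> cutpts G f e" using pieces_bounds[OF p] x by (auto simp: cutpts_eq edge_neumann_pts_def)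
  then show False using p x by (auto simp: mem_pieces_iff)
qed

lemma piece_start_neumann:
  assumes p: "(e, a, b) \<in> pieces G f" and "a \<noteq> 0"
  shows "a \<in> edge_neumann_pts e"
proof -
  have "e \<in> edges G" "a \<in> cutpts G f e" using p by (simp_all add: mem_pieces_iff)
  moreover have "a < len G e" using pieces_bounds[OF p] by simp
  ultimately show ?thesis using assms(2) by (simp add: cutpts_eq)
qed

lemma piece_end_neumann:
  assumes p: "(e, a, b) \<in> pieces G f" and "b \<noteq> len G e"
  shows "b \<in> edge_neumann_pts e"
proof -
  have "e \<in> edges G" "b \<in> cutpts G f e" using p by (simp_all add: mem_pieces_iff)
  moreover have "0 < b" using pieces_bounds[OF p] by simp
  ultimately show ?thesis using assms(2) by (simp add: cutpts_eq)
qed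

lemma pieces_same_start:
  assumes "(e, a, b) \<in> pieces G f" "(e, a, b') \<in> pieces G f"
  shows "b = b'"
proof (rule ccontr)
  assume "b \<noteq> b'"
  then consider "b < b'" | "b' < b" by linarith
  then show False using assms unfolding mem_pieces_iff by cases blast+
qed

lemma pieces_same_end:
  assumes "(e, a, b) \<in> pieces G f" "(e, a', b) \<in> pieces G f"
  shows "a = a'"
proof (rule ccontr)
  assume "a \<noteq> a'"
  then consider "a < a'" | "a' < a" by linarith
  then show False using assms unfolding mem_pieces_iff by cases blast+
qed

lemma piece_not_whole_edge: "(e, a, b) \<in> pieces G f \<Longrightarrow> \<not> (a = 0 \<and> b = len G e)"
proof
  assume p: "(e, a, b) \<in> pieces G f" and ab: "a = 0 \<and> b = len G e"
  have e: "e \<in> edges G" using pieces_bounds[OF p] by simp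
  obtain x where "0 < x" "x < len G e" "Dv G f e x = 0" using exists_critical_point[OF e] .
  then have "x \<in> cutpts G f e" using e by (auto simp: cutpts_eq edge_neumann_pts_def)
  then show False using p ab \<open>0 < x\<close> \<open>x < len G e\<close> by (auto simp: mem_pieces_iff)
qed

definition end_piece :: "'e \<Rightarrow> bool \<Rightarrow> 'e \<times> real \<times> real" where
  "end_piece e b = (if b then (e, Max {y\<in>cutpts G f e. y < len G e}, len G e)
                         else (e, 0, Min {y\<in>cutpts G f e. 0 < y}))"

lemma end_piece_in_pieces:
  assumes e: "e \<in> edges G"
  shows "end_piece e b \<in> pieces G f"
proof (cases b)
  case True
  let ?S = "{y\<in>cutpts G f e. y < len G e}"
  have fin: "finite ?S" using finite_cutpts[OF e] by simp
  have "0 \<in> ?S" using len_G_pos[OF e] by (auto simp: cutpts_def)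
  then have "Max ?S \<in> ?S" using Max_in[OF fin] by blast
  moreover have "\<And>y. y \<in> ?S \<Longrightarrow> y \<le> Max ?S" using fin by simp
  moreover have eq: "end_piece e b = (e, Max ?S, len G e)" using True by (simp add: end_piece_def)
  ultimately show ?thesis unfolding eq mem_pieces_iff using e by (force simp: cutpts_def)
next
  case False
  let ?S = "{y\<in>cutpts G f e. 0 < y}"
  have fin: "finite ?S" using finite_cutpts[OF e] by simp
  have "len G e \<in> ?S" using len_G_pos[OF e] by (auto simp: cutpts_def)
  then have "Min ?S \<in> ?S" using Min_in[OF fin] by blast
  moreover have "\<And>y. y \<in> ?S \<Longrightarrow> Min ?S \<le> y" using fin by simp
  moreover have eq: "end_piece e b = (e, 0, Min ?S)" using False by (simp add: end_piece_def)
  ultimately show ?thesis unfolding eq mem_pieces_iff using e by (force simp: cutpts_def)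
qed

abbreviation Gcut :: "('v + 'e \<times> real \<times> bool, 'e \<times> real \<times> real) mgraph" where
  "Gcut \<equiv> cut_graph G f"

lemma edges_Gcut: "edges Gcut = pieces G f"
  by (simp add: cut_graph_def)

lemma len_Gcut: "len Gcut (e, a, b) = b - a"
  by (simp add: cut_graph_def)

definition piece_pos :: "'e \<times> real \<times> real \<Rightarrow> bool \<Rightarrow> real" where
  "piece_pos p b = (case p of (e, s, t) \<Rightarrow> if b then t else s)"

lemma endpt_Gcut: "endpt Gcut (e, a, b) bb =
   (if bb then (if b = len G e then Inl (snd (ends G e)) else Inr (e, b, False))
          else (if a = 0 then Inl (fst (ends G e)) else Inr (e, a, True)))"
  by (simp add: endpt_def cut_graph_def cut_ends_def)

lemma endpt_Gcut_Inr:
  assumes "(e, a, b) \<in> pieces G f" "endpt Gcut (e, a, b) bb = Inr z"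
  shows "z = (e, piece_pos (e, a, b) bb, \<not> bb) \<and> piece_pos (e, a, b) bb \<in> edge_neumann_pts e"
  using assms piece_start_neumann piece_end_neumann
  by (auto simp: endpt_Gcut piece_pos_def split: if_splits)

lemma endpt_Gcut_Inr_unique:
  assumes p: "p \<in> pieces G f" and p': "p' \<in> pieces G f"
    and z: "endpt Gcut p bb = Inr z" and z': "endpt Gcut p' bb' = Inr z"
  shows "p = p' \<and> bb = bb'"
proof -
  obtain e a b where pe: "p = (e, a, b)" by (cases p) auto
  obtain e' a' b' where pe': "p' = (e', a', b')" by (cases p') auto
  have "z = (e, piece_pos p bb, \<not> bb)" "z = (e', piece_pos p' bb', \<not> bb')"
    using endpt_Gcut_Inr p p' z z' pe pe' by auto
  then have same: "e = e'" "bb = bb'" "piece_pos p bb = piece_pos p' bb'" by auto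
  show ?thesis
  proof (cases bb)
    case True
    then have "b = b'" using same by (simp add: pe pe' piece_pos_def)
    then show ?thesis using pieces_same_end p p' same pe pe' by auto
  next
    case False
    then have "a = a'" using same by (simp add: pe pe' piece_pos_def)
    then show ?thesis using pieces_same_start p p' same pe pe' by auto
  qed
qed

lemma endpt_Gcut_Inl:
  assumes p: "p \<in> pieces G f" and v: "endpt Gcut p bb = Inl v"
  shows "p = end_piece (fst p) bb \<and> v = endpt G (fst p) bb \<and> fst p \<in> edges G"
proof -
  obtain e a b where pe: "p = (e, a, b)" by (cases p) auto
  have e: "e \<in> edges G" using pieces_bounds p pe by blast
  show ?thesis
  proof (cases bb)
    case True
    then have "b = len G e" "v = endpt G e bb" using v by (auto simp: pe endpt_Gcut endpt_def[of G] split: if_splits)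
    then show ?thesis
      using pieces_same_end[of e a b] p pe end_piece_in_pieces[OF e, of True] True e
      by (simp add: end_piece_def)
  next
    case False
    then have "a = 0" "v = endpt G e bb" using v by (auto simp: pe endpt_Gcut endpt_def[of G] split: if_splits)
    then show ?thesis
      using pieces_same_start[of e a b] p pe end_piece_in_pieces[OF e, of False] False e
      by (simp add: end_piece_def)
  qed
qed

lemma endpt_Gcut_Inl_unique:
  assumes p: "p \<in> pieces G f" and "endpt Gcut p bb = Inl v" and "endpt Gcut p bb' = Inl w"
  shows "bb = bb' \<and> v = w"
proof -
  obtain e a b where pe: "p = (e, a, b)" by (cases p) auto
  have "\<not> (endpt Gcut p False = Inl v' \<and> endpt Gcut p True = Inl w')" for v' w'
    using piece_not_whole_edge[of e a b] p by (auto simp: pe endpt_Gcut split: if_splits)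
  then show ?thesis using assms by (cases bb; cases bb') auto
qed

lemma endpt_end_piece: "e \<in> edges G \<Longrightarrow> endpt Gcut (end_piece e bb) bb = Inl (endpt G e bb)"
  by (auto simp: end_piece_def endpt_Gcut endpt_def[of G])

lemma piece_pos_end_piece: "piece_pos (end_piece e bb) bb = (if bb then len G e else 0)"
  by (simp add: end_piece_def piece_pos_def)

lemma restrict_nd_piece: "restrict_nd f (e, a, b) t = f e (a + t)"
  by (simp add: restrict_nd_def)

lemma restrict_nd_derivatives:
  assumes p: "(e, a, b) \<in> pieces G f" and t: "t \<in> {0..b - a}"
  shows "Dv Gcut (restrict_nd f) (e, a, b) t = Dv G f e (a + t)"
    and "(restrict_nd f (e, a, b) has_vector_derivative Dv G f e (a + t)) (at t within {0..b - a})"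
    and "((\<lambda>s. Dv G f e (a + s)) has_vector_derivative (- (k\<^sup>2) * restrict_nd f (e, a, b) t)) (at t within {0..b - a})"
proof -
  note pb = pieces_bounds[OF p]
  have at: "a + t \<in> {0..len G e}" using pb t by auto
  have "(f e has_vector_derivative Dv G f e (a + t)) (at (a + t) within {0..len G e})"
    using solves_f pb at by (auto simp: solves_def)
  then have d: "((\<lambda>s. f e (a + s)) has_vector_derivative Dv G f e (a + t)) (at t within {0..b - a})"
    using has_vector_derivative_shift pb t by blast
  have gfun: "restrict_nd f (e, a, b) = (\<lambda>s. f e (a + s))" by (rule ext) (simp add: restrict_nd_piece)
  show "(restrict_nd f (e, a, b) has_vector_derivative Dv G f e (a + t)) (at t within {0..b - a})"
    using d gfun by simp
  show "Dv Gcut (restrict_nd f) (e, a, b) t = Dv G f e (a + t)"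
    unfolding Dv_def[of Gcut] len_Gcut gfun using pb t d by (intro vector_derivative_within_closed_interval) auto
  have "(Dv G f e has_vector_derivative (- (k\<^sup>2) * f e (a + t))) (at (a + t) within {0..len G e})"
    using solves_f pb at by (auto simp: solves_def)
  then show "((\<lambda>s. Dv G f e (a + s)) has_vector_derivative (- (k\<^sup>2) * restrict_nd f (e, a, b) t)) (at t within {0..b - a})"
    using has_vector_derivative_shift pb t by (simp add: restrict_nd_piece)
qed

lemma endval_restrict_nd: "p \<in> pieces G f \<Longrightarrow> endval Gcut (restrict_nd f) p bb = f (fst p) (piece_pos p bb)"
  by (cases p) (auto simp: endval_def restrict_nd_piece piece_pos_def len_Gcut)

lemma outder_restrict_nd:
  assumes p: "p \<in> pieces G f"
  shows "outder Gcut (restrict_nd f) p bb =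
    (if bb then - Dv G f (fst p) (piece_pos p bb) else Dv G f (fst p) (piece_pos p bb))"
proof -
  obtain e a b where pe: "p = (e, a, b)" by (cases p) auto
  note pb = pieces_bounds[OF p[unfolded pe]]
  have "Dv Gcut (restrict_nd f) (e, a, b) (b - a) = Dv G f e b"
    using restrict_nd_derivatives(1)[OF p[unfolded pe], of "b - a"] pb by simp
  moreover have "Dv Gcut (restrict_nd f) (e, a, b) 0 = Dv G f e a"
    using restrict_nd_derivatives(1)[OF p[unfolded pe], of 0] pb by simp
  ultimately show ?thesis by (auto simp: outder_def pe piece_pos_def len_Gcut)
qed

lemma end_piece_values:
  assumes e: "e \<in> edges G"
  shows "endval Gcut (restrict_nd f) (end_piece e bb) bb = endval G f e bb"
    and "outder Gcut (restrict_nd f) (end_piece e bb) bb = outder G f e bb"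
proof -
  have f: "fst (end_piece e bb) = e" by (simp add: end_piece_def)
  show "endval Gcut (restrict_nd f) (end_piece e bb) bb = endval G f e bb"
    using endval_restrict_nd[OF end_piece_in_pieces[OF e]] piece_pos_end_piece f
    by (simp add: endval_def[of G])
  show "outder Gcut (restrict_nd f) (end_piece e bb) bb = outder G f e bb"
    using outder_restrict_nd[OF end_piece_in_pieces[OF e], of bb] piece_pos_end_piece f
    by (cases bb) (simp_all add: outder_def[of G])
qed

lemma neumann_end_values:
  assumes q: "q \<in> pieces G f" and z: "endpt Gcut q bb = Inr z"
  shows "outder Gcut (restrict_nd f) q bb = 0" "endval Gcut (restrict_nd f) q bb \<noteq> 0"
proof -
  obtain e a b where qe: "q = (e, a, b)" by (cases q) auto
  have e: "e \<in> edges G" using pieces_bounds q qe by blast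
  have N: "piece_pos q bb \<in> edge_neumann_pts e" using endpt_Gcut_Inr q z qe by simp
  then have d: "Dv G f e (piece_pos q bb) = 0" by (simp add: edge_neumann_pts_def)
  show "outder Gcut (restrict_nd f) q bb = 0" using outder_restrict_nd[OF q, of bb] d qe by (cases bb) simp_all
  show "endval Gcut (restrict_nd f) q bb \<noteq> 0"
    using endval_restrict_nd[OF q] qe f_nonzero_at_critical_point[OF e _ d] N
    by (simp add: edge_neumann_pts_def)
qed

lemma endval_restrict_nd_nonzero:
  assumes q: "q \<in> pieces G f"
  shows "endval Gcut (restrict_nd f) q bb \<noteq> 0"
proof (cases "endpt Gcut q bb")
  case (Inl v)
  then have q_eq: "q = end_piece (fst q) bb" and e: "fst q \<in> edges G"
    using endpt_Gcut_Inl[OF q Inl] by blast+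
  have "endval Gcut (restrict_nd f) q bb = endval G f (fst q) bb"
    using end_piece_values(1)[OF e, of bb] q_eq by metis
  then show ?thesis using endval_f_nonzero[OF e] by simp
next
  case (Inr z)
  then show ?thesis using neumann_end_values(2)[OF q] by simp
qed

end

section \<open>A Neumann domain is a Neumann star\<close>

locale neumann_domain_piece = high_frequency_eigenfunction G f k for G :: "('v,'e) mgraph" and f k +
  fixes p0 :: "'e \<times> real \<times> real"
  assumes p0_piece: "p0 \<in> pieces G f"
begin

abbreviation Omega :: "('v + 'e \<times> real \<times> bool, 'e \<times> real \<times> real) mgraph" where
  "Omega \<equiv> component_graph Gcut p0"

definition comp_edges :: "('e \<times> real \<times> real) set" where
  "comp_edges = {q \<in> edges Gcut. (p0, q) \<in> (edge_adj Gcut)\<^sup>*}"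

lemma edges_Omega: "edges Omega = comp_edges"
  by (simp add: comp_edges_def component_graph_def Let_def)

lemma len_Omega: "len Omega = len Gcut"
  by (simp add: component_graph_def Let_def)

lemma ends_Omega: "ends Omega = ends Gcut"
  by (simp add: component_graph_def Let_def)

lemma verts_Omega: "verts Omega = {endpt Gcut q b | q b. q \<in> comp_edges}"
  by (simp add: comp_edges_def component_graph_def Let_def)

lemma endpt_Omega: "endpt Omega = endpt Gcut"
  by (simp add: fun_eq_iff endpt_def ends_Omega)

lemma ends_at_Omega: "ends_at Omega v = {(q, b). q \<in> comp_edges \<and> endpt Gcut q b = v}"
  by (simp add: ends_at_def endpt_Omega edges_Omega)

lemma Dv_Omega: "Dv Omega = Dv Gcut"
  by (simp add: fun_eq_iff Dv_def len_Omega)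

lemma endval_Omega: "endval Omega = endval Gcut"
  by (simp add: fun_eq_iff endval_def len_Omega)

lemma outder_Omega: "outder Omega = outder Gcut"
  by (simp add: fun_eq_iff outder_def Dv_Omega len_Omega)

lemma comp_edges_subset: "comp_edges \<subseteq> pieces G f"
  by (auto simp: comp_edges_def edges_Gcut)

lemma p0_in_comp_edges: "p0 \<in> comp_edges"
  using p0_piece by (simp add: comp_edges_def edges_Gcut)

lemma comp_edges_closed:
  assumes q: "q \<in> comp_edges" and q': "q' \<in> pieces G f" and eq: "endpt Gcut q b = endpt Gcut q' b'"
  shows "q' \<in> comp_edges"
proof -
  have "(q, q') \<in> edge_adj Gcut" using q q' eq comp_edges_subset by (auto simp: edge_adj_def edges_Gcut)
  then show ?thesis using q q' by (auto simp: comp_edges_def edges_Gcut intro: rtrancl_into_rtrancl)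
qed

lemma verts_OmegaE:
  assumes "w \<in> verts Omega"
  obtains q b where "q \<in> comp_edges" "endpt Gcut q b = w"
  using assms by (auto simp: verts_Omega)

lemma endpt_in_verts_Omega: "q \<in> comp_edges \<Longrightarrow> endpt Gcut q b \<in> verts Omega"
  unfolding verts_Omega by blast

lemma ends_at_Omega_Inr:
  assumes w: "Inr z \<in> verts Omega"
  obtains q b where "q \<in> comp_edges" "endpt Gcut q b = Inr z" "ends_at Omega (Inr z) = {(q, b)}"
proof -
  obtain q b where qb: "q \<in> comp_edges" "endpt Gcut q b = Inr z" using verts_OmegaE[OF w] by blast
  have "ends_at Omega (Inr z) = {(q, b)}"
  proof (intro set_eqI iffI)
    fix p assume "p \<in> ends_at Omega (Inr z)"
    then obtain q' b' where p: "p = (q', b')" "q' \<in> comp_edges" "endpt Gcut q' b' = Inr z"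
      by (auto simp: ends_at_Omega)
    then have "q' = q \<and> b' = b" using endpt_Gcut_Inr_unique[of q' q b' z b] qb comp_edges_subset by auto
    then show "p \<in> {(q, b)}" using p by simp
  qed (use qb in \<open>auto simp: ends_at_Omega\<close>)
  then show ?thesis using qb that by blast
qed

lemma deg_Omega_Inr: "Inr z \<in> verts Omega \<Longrightarrow> deg Omega (Inr z) = 1"
  by (metis ends_at_Omega_Inr deg_def is_singletonI is_singleton_altdef)

definition lift_end :: "'e \<times> bool \<Rightarrow> ('e \<times> real \<times> real) \<times> bool" where
  "lift_end = (\<lambda>(e, b). (end_piece e b, b))"

lemma ends_at_Omega_Inl:
  assumes w: "Inl v \<in> verts Omega"
  shows "v \<in> verts G" "ends_at Omega (Inl v) = lift_end ` ends_at G v" "inj_on lift_end (ends_at G v)"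
proof -
  obtain q0 b0 where qb: "q0 \<in> comp_edges" "endpt Gcut q0 b0 = Inl v" using verts_OmegaE[OF w] by blast
  then have "v = endpt G (fst q0) b0" "fst q0 \<in> edges G"
    using endpt_Gcut_Inl[OF _ qb(2)] comp_edges_subset by blast+
  then show "v \<in> verts G" using endpt_G_in_verts by auto
  show "ends_at Omega (Inl v) = lift_end ` ends_at G v"
  proof (intro set_eqI iffI)
    fix p assume "p \<in> ends_at Omega (Inl v)"
    then obtain q b where p: "p = (q, b)" "q \<in> comp_edges" "endpt Gcut q b = Inl v"
      by (auto simp: ends_at_Omega)
    then have "q = end_piece (fst q) b \<and> v = endpt G (fst q) b \<and> fst q \<in> edges G"
      using endpt_Gcut_Inl comp_edges_subset by blast
    then show "p \<in> lift_end ` ends_at G v" using p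
      by (auto simp: lift_end_def ends_at_def intro!: image_eqI[of _ _ "(fst q, b)"])
  next
    fix p assume "p \<in> lift_end ` ends_at G v"
    then obtain e b where eb: "p = (end_piece e b, b)" "e \<in> edges G" "endpt G e b = v"
      by (auto simp: lift_end_def ends_at_def)
    then have "endpt Gcut (end_piece e b) b = Inl v" using endpt_end_piece by simp
    moreover then have "end_piece e b \<in> comp_edges"
      using comp_edges_closed[OF qb(1) end_piece_in_pieces[OF eb(2)]] qb(2) by metis
    ultimately show "p \<in> ends_at Omega (Inl v)" using eb by (auto simp: ends_at_Omega)
  qed
  show "inj_on lift_end (ends_at G v)"
    by (auto simp: inj_on_def lift_end_def end_piece_def split: if_splits)
qed

lemma deg_Omega_Inl: "Inl v \<in> verts Omega \<Longrightarrow> deg Omega (Inl v) = deg G v"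
  using ends_at_Omega_Inl[of v] by (simp add: deg_def card_image)

lemma restrict_nd_ode_on_Omega:
  assumes q: "q \<in> comp_edges" and x: "x \<in> {0..len Gcut q}"
  shows "(restrict_nd f q has_vector_derivative Dv Gcut (restrict_nd f) q x) (at x within {0..len Gcut q})"
    and "(Dv Gcut (restrict_nd f) q has_vector_derivative (- (k\<^sup>2) * restrict_nd f q x)) (at x within {0..len Gcut q})"
proof -
  obtain e a b where qe: "q = (e, a, b)" by (cases q) auto
  have qp: "(e, a, b) \<in> pieces G f" using q qe comp_edges_subset by auto
  have x': "x \<in> {0..b - a}" using x qe len_Gcut by simp
  show "(restrict_nd f q has_vector_derivative Dv Gcut (restrict_nd f) q x) (at x within {0..len Gcut q})"
    using restrict_nd_derivatives(1,2)[OF qp x'] qe len_Gcut by simp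
  have "(Dv Gcut (restrict_nd f) (e, a, b) has_vector_derivative (- (k\<^sup>2) * restrict_nd f (e, a, b) x))
      (at x within {0..b - a})"
    by (rule has_vector_derivative_transform[OF x' _ restrict_nd_derivatives(3)[OF qp x']])
      (simp add: restrict_nd_derivatives(1)[OF qp])
  then show "(Dv Gcut (restrict_nd f) q has_vector_derivative (- (k\<^sup>2) * restrict_nd f q x)) (at x within {0..len Gcut q})"
    using qe len_Gcut by simp
qed

lemma endval_Omega_continuous:
  assumes w: "w \<in> verts Omega" and p: "p \<in> ends_at Omega w" and p': "p' \<in> ends_at Omega w"
  shows "endval Gcut (restrict_nd f) (fst p) (snd p) = endval Gcut (restrict_nd f) (fst p') (snd p')"
proof (cases w)
  case (Inl v)
  then have wv: "Inl v \<in> verts Omega" using w by simp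
  obtain e b e' b' where eb: "(e, b) \<in> ends_at G v" "p = lift_end (e, b)"
    and eb': "(e', b') \<in> ends_at G v" "p' = lift_end (e', b')"
    using p p' Inl ends_at_Omega_Inl(2)[OF wv] by auto
  have "endval G f e b = endval G f e' b'"
    using solves_f ends_at_Omega_Inl(1)[OF wv] eb(1) eb'(1) unfolding solves_def by fastforce
  then show ?thesis using end_piece_values(1) eb eb' by (auto simp: lift_end_def ends_at_def)
next
  case (Inr z)
  then show ?thesis using ends_at_Omega_Inr[of z] w p p' by (metis singletonD)
qed

lemma kirchhoff_Omega:
  assumes w: "w \<in> verts Omega"
  shows "(\<Sum>p\<in>ends_at Omega w. outder Gcut (restrict_nd f) (fst p) (snd p)) = 0"
proof (cases w)
  case (Inl v)
  then have wv: "Inl v \<in> verts Omega" using w by simp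
  have "(\<Sum>p\<in>ends_at Omega w. outder Gcut (restrict_nd f) (fst p) (snd p)) =
      (\<Sum>p\<in>ends_at G v. outder Gcut (restrict_nd f) (fst (lift_end p)) (snd (lift_end p)))"
    using ends_at_Omega_Inl[OF wv] Inl by (simp add: sum.reindex)
  also have "\<dots> = (\<Sum>p\<in>ends_at G v. outder G f (fst p) (snd p))"
    by (rule sum.cong) (auto simp: lift_end_def ends_at_def end_piece_values(2))
  also have "\<dots> = 0" using solves_f ends_at_Omega_Inl(1)[OF wv] by (simp add: solves_def)
  finally show ?thesis .
next
  case (Inr z)
  then obtain q b where qb: "q \<in> comp_edges" "endpt Gcut q b = Inr z" "ends_at Omega w = {(q, b)}"
    using ends_at_Omega_Inr[of z] w by metis
  then show ?thesis using neumann_end_values(1)[OF _ qb(2)] comp_edges_subset by auto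
qed

lemma solves_Omega: "solves Omega (k\<^sup>2) (restrict_nd f)"
  unfolding solves_def Dv_Omega endval_Omega outder_Omega edges_Omega len_Omega
  using restrict_nd_ode_on_Omega endval_Omega_continuous kirchhoff_Omega by blast

end

context neumann_domain_piece
begin

lemma finite_comp_edges: "finite comp_edges"
  using finite_pieces comp_edges_subset by (rule finite_subset[rotated])

lemma wf_Omega: "wf_graph Omega"
  unfolding wf_graph_def
proof (intro conjI ballI)
  have "verts Omega = (\<lambda>(q, b). endpt Gcut q b) ` (comp_edges \<times> UNIV)" by (auto simp: verts_Omega)
  then show "finite (verts Omega)" using finite_comp_edges by simp
  show "finite (edges Omega)" using finite_comp_edges by (simp add: edges_Omega)
  fix q assume "q \<in> edges Omega"
  then have q: "q \<in> comp_edges" by (simp add: edges_Omega)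
  show "fst (ends Omega q) \<in> verts Omega" "snd (ends Omega q) \<in> verts Omega"
    using endpt_in_verts_Omega[OF q, of False] endpt_in_verts_Omega[OF q, of True]
    by (simp_all add: ends_Omega endpt_def)
  obtain e a b where "q = (e, a, b)" by (cases q) auto
  then show "len Omega q > 0" using pieces_bounds[of e a b] q comp_edges_subset by (auto simp: len_Omega len_Gcut)
qed

lemma center_starI:
  assumes c: "c \<in> verts Omega"
    and star: "\<forall>q\<in>comp_edges. (endpt Gcut q False = c \<and> endpt Gcut q True \<noteq> c) \<or>
                               (endpt Gcut q True = c \<and> endpt Gcut q False \<noteq> c)"
    and leaves: "\<forall>w\<in>verts Omega - {c}. \<exists>z. w = Inr z"
  shows "center_star Omega c"
proof
  show "\<forall>e\<in>edges Omega. (fst (ends Omega e) = c \<and> snd (ends Omega e) \<noteq> c) \<or> (snd (ends Omega e) = c \<and> fst (ends Omega e) \<noteq> c)"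
    using star by (simp add: edges_Omega ends_Omega endpt_def)
  show "\<forall>v\<in>verts Omega - {c}. deg Omega v = 1"
  proof
    fix v assume v: "v \<in> verts Omega - {c}"
    then obtain z where "v = Inr z" using leaves by blast
    then show "deg Omega v = 1" using deg_Omega_Inr v by simp
  qed
qed (use wf_Omega c p0_in_comp_edges edges_Omega in auto)

lemma edge_adjE:
  assumes "(y, z) \<in> edge_adj Gcut"
  obtains b b' where "y \<in> pieces G f" "z \<in> pieces G f" "endpt Gcut y b = endpt Gcut z b'"
  using assms by (auto simp: edge_adj_def edges_Gcut)

text \<open>Adjacent pieces share a vertex of G, because a Neumann point is the end of a single piece.\<close>

lemma comp_edges_through_vertex:
  assumes v0: "endpt Gcut p0 b0 = Inl v0" and q: "q \<in> comp_edges"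
  shows "\<exists>b. endpt Gcut q b = Inl v0"
proof -
  have "(p0, q) \<in> (edge_adj Gcut)\<^sup>*" using q by (simp add: comp_edges_def)
  then show ?thesis
  proof (induction rule: rtrancl_induct)
    case base then show ?case using v0 by blast
  next
    case (step y z)
    from step.hyps(2) obtain b b' where yz: "y \<in> pieces G f" "z \<in> pieces G f" "endpt Gcut y b = endpt Gcut z b'"
      by (rule edge_adjE)
    obtain bb where bb: "endpt Gcut y bb = Inl v0" using step.IH by blast
    show ?case
    proof (cases "endpt Gcut y b")
      case (Inl u)
      then show ?thesis using endpt_Gcut_Inl_unique[OF yz(1) Inl bb] yz(3) by auto
    next
      case (Inr w)
      then show ?thesis using endpt_Gcut_Inr_unique[OF yz(1) yz(2) Inr] yz(3) bb by auto
    qed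
  qed
qed

lemma center_star_through_vertex:
  assumes v0: "endpt Gcut p0 b0 = Inl v0"
  shows "center_star Omega (Inl v0)"
proof (rule center_starI)
  show "Inl v0 \<in> verts Omega" using endpt_in_verts_Omega[OF p0_in_comp_edges, of b0] v0 by simp
  show "\<forall>q\<in>comp_edges. (endpt Gcut q False = Inl v0 \<and> endpt Gcut q True \<noteq> Inl v0) \<or>
                        (endpt Gcut q True = Inl v0 \<and> endpt Gcut q False \<noteq> Inl v0)"
  proof
    fix q assume q: "q \<in> comp_edges"
    obtain bb where bb: "endpt Gcut q bb = Inl v0" using comp_edges_through_vertex[OF v0 q] by blast
    have "endpt Gcut q (\<not> bb) \<noteq> Inl v0"
      using endpt_Gcut_Inl_unique[of q bb v0 "\<not> bb" v0] bb q comp_edges_subset by auto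
    then show "(endpt Gcut q False = Inl v0 \<and> endpt Gcut q True \<noteq> Inl v0) \<or>
               (endpt Gcut q True = Inl v0 \<and> endpt Gcut q False \<noteq> Inl v0)"
      using bb by (cases bb) auto
  qed
  show "\<forall>w\<in>verts Omega - {Inl v0}. \<exists>z. w = Inr z"
  proof
    fix w assume w: "w \<in> verts Omega - {Inl v0}"
    then obtain q b where qb: "q \<in> comp_edges" "endpt Gcut q b = w" by (blast elim: verts_OmegaE)
    obtain bb where "endpt Gcut q bb = Inl v0" using comp_edges_through_vertex[OF v0 qb(1)] by blast
    then show "\<exists>z. w = Inr z"
      using endpt_Gcut_Inl_unique[of q b _ bb v0] qb w comp_edges_subset by (cases w) auto
  qed
qed

lemma comp_edges_without_vertex:
  assumes no_vertex: "\<forall>b v. endpt Gcut p0 b \<noteq> Inl v" and q: "q \<in> comp_edges"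
  shows "q = p0"
proof -
  have "(p0, q) \<in> (edge_adj Gcut)\<^sup>*" using q by (simp add: comp_edges_def)
  then show ?thesis
  proof (induction rule: rtrancl_induct)
    case (step y z)
    from step.hyps(2) obtain b b' where yz: "y \<in> pieces G f" "z \<in> pieces G f" "endpt Gcut y b = endpt Gcut z b'"
      by (rule edge_adjE)
    obtain w where "endpt Gcut y b = Inr w" using no_vertex step.IH by (cases "endpt Gcut y b") auto
    then show ?case using endpt_Gcut_Inr_unique[OF yz(1) yz(2)] yz(3) step.IH by metis
  qed simp
qed

lemma center_star_without_vertex:
  assumes no_vertex: "\<forall>b v. endpt Gcut p0 b \<noteq> Inl v"
  shows "center_star Omega (endpt Gcut p0 False)"
proof (rule center_starI)
  show "endpt Gcut p0 False \<in> verts Omega" using endpt_in_verts_Omega[OF p0_in_comp_edges] .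
  obtain w where w: "endpt Gcut p0 True = Inr w" using no_vertex by (cases "endpt Gcut p0 True") auto
  have "endpt Gcut p0 True \<noteq> endpt Gcut p0 False"
    using endpt_Gcut_Inr_unique[OF p0_piece p0_piece w] w by fastforce
  then show "\<forall>q\<in>comp_edges. (endpt Gcut q False = endpt Gcut p0 False \<and> endpt Gcut q True \<noteq> endpt Gcut p0 False) \<or>
                           (endpt Gcut q True = endpt Gcut p0 False \<and> endpt Gcut q False \<noteq> endpt Gcut p0 False)"
    using comp_edges_without_vertex[OF no_vertex] by auto
  show "\<forall>w\<in>verts Omega - {endpt Gcut p0 False}. \<exists>z. w = Inr z"
  proof
    fix w assume w: "w \<in> verts Omega - {endpt Gcut p0 False}"
    then obtain q b where qb: "q \<in> comp_edges" "endpt Gcut q b = w" by (blast elim: verts_OmegaE)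
    then have "endpt Gcut p0 b = w" using comp_edges_without_vertex[OF no_vertex qb(1)] by simp
    then show "\<exists>z. w = Inr z" using no_vertex by (cases w) auto
  qed
qed

lemma exists_center: obtains c where "center_star Omega c"
  using center_star_through_vertex center_star_without_vertex by blast

lemma deg_Omega_ne_2: "w \<in> verts Omega \<Longrightarrow> deg Omega w \<noteq> 2"
  using standard ends_at_Omega_Inl(1) deg_Omega_Inl deg_Omega_Inr
  by (cases w) (auto simp: standard_graph_def)

lemma standard_graph_Omega: "standard_graph Omega"
proof -
  obtain c where "center_star Omega c" by (rule exists_center)
  then have "connected_graph Omega" by (rule center_star.connected)
  then show ?thesis using wf_Omega deg_Omega_ne_2 by (simp add: standard_graph_def)
qed

lemma endval_Omega_nonzero: "\<forall>q\<in>edges Omega. \<forall>b. endval Omega (restrict_nd f) q b \<noteq> 0"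
  using endval_restrict_nd_nonzero comp_edges_subset by (auto simp: edges_Omega endval_Omega)

lemma Dv_Omega_nonzero: "\<forall>q\<in>edges Omega. \<forall>t. 0 < t \<and> t < len Omega q \<longrightarrow> Dv Omega (restrict_nd f) q t \<noteq> 0"
proof (intro ballI allI impI)
  fix q t assume q: "q \<in> edges Omega" and t: "0 < t \<and> t < len Omega q"
  obtain e a b where qe: "q = (e, a, b)" by (cases q) auto
  have qp: "(e, a, b) \<in> pieces G f" using q qe comp_edges_subset by (auto simp: edges_Omega)
  have t': "t \<in> {0..b - a}" "a < a + t" "a + t < b" using t qe by (auto simp: len_Omega len_Gcut)
  then show "Dv Omega (restrict_nd f) q t \<noteq> 0"
    using Dv_f_nonzero_in_piece[OF qp] restrict_nd_derivatives(1)[OF qp t'(1)] qe by (simp add: Dv_Omega)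
qed

lemma outder_Omega_nonzero:
  assumes w: "w \<in> verts Omega - boundary Omega" and p: "p \<in> ends_at Omega w"
  shows "outder Omega (restrict_nd f) (fst p) (snd p) \<noteq> 0"
proof -
  have "deg Omega w \<noteq> 1" using w by (simp add: boundary_def)
  then obtain v where v: "w = Inl v" using deg_Omega_Inr w by (cases w) auto
  have wv: "Inl v \<in> verts Omega" using w v by simp
  have "v \<in> verts G - boundary G"
    using ends_at_Omega_Inl(1)[OF wv] deg_Omega_Inl[OF wv] \<open>deg Omega w \<noteq> 1\<close> v by (simp add: boundary_def)
  moreover obtain e bb where eb: "(e, bb) \<in> ends_at G v" "p = lift_end (e, bb)"
    using p v ends_at_Omega_Inl(2)[OF wv] by auto
  ultimately have "outder G f e bb \<noteq> 0"
    using generic unfolding generic_eigenfunction_def by fastforce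
  then show ?thesis
    using end_piece_values(2)[of e bb] eb by (simp add: lift_end_def outder_Omega ends_at_def)
qed

lemma is_eigenfunction_Omega: "is_eigenfunction Omega (k\<^sup>2) (restrict_nd f)"
  unfolding is_eigenfunction_def
proof (intro conjI bexI)
  show "solves Omega (k\<^sup>2) (restrict_nd f)" by (rule solves_Omega)
  show "p0 \<in> edges Omega" using p0_in_comp_edges by (simp add: edges_Omega)
  show "0 \<in> {0..len Omega p0}" using wf_Omega \<open>p0 \<in> edges Omega\<close> by (auto simp: wf_graph_def less_imp_le)
  show "restrict_nd f p0 0 \<noteq> 0" using endval_restrict_nd_nonzero[OF p0_piece, of False] by (simp add: endval_def)
qed

theorem neumann_domain_properties:
  "(star_graph Omega \<or> interval_graph Omega) \<and> standard_graph Omega \<and>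
   generic_eigenfunction Omega (k\<^sup>2) (restrict_nd f) \<and> Ncount Omega k = nodal_count Omega (restrict_nd f)"
proof -
  obtain c where "center_star Omega c" by (rule exists_center)
  then interpret star_eigenfunction Omega c k "restrict_nd f"
    using k_pos solves_Omega endval_Omega_nonzero Dv_Omega_nonzero
    by (simp add: star_eigenfunction_def star_eigenfunction_axioms_def)
  have "generic_eigenfunction Omega (k\<^sup>2) (restrict_nd f)"
    unfolding generic_eigenfunction_def
    using is_eigenfunction_Omega mult_k outder_Omega_nonzero endval_Omega_nonzero by (auto simp: ends_at_def)
  then show ?thesis using star_graph standard_graph_Omega Ncount_eq_nodal_count by simp
qed

end

theorem lemma3p1:
  fixes G :: "('v, 'e) mgraph"
    and f :: "'e \<Rightarrow> real \<Rightarrow> real"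
    and k :: real
    and \<Omega> :: "('v + 'e \<times> real \<times> bool, 'e \<times> real \<times> real) mgraph"
  assumes "standard_graph G"
    and "generic_eigenfunction G (k\<^sup>2) f"
    and "k > pi / Lmin G"
    and "neumann_domain G f \<Omega>"
  shows "(star_graph \<Omega> \<or> interval_graph \<Omega>) \<and>
         standard_graph \<Omega> \<and>
         generic_eigenfunction \<Omega> (k\<^sup>2) (restrict_nd f) \<and>
         Ncount \<Omega> k = nodal_count \<Omega> (restrict_nd f)"
proof -
  obtain p0 where p0: "p0 \<in> pieces G f" and \<Omega>: "\<Omega> = component_graph (cut_graph G f) p0"
    using assms(4) by (auto simp: neumann_domain_def cut_graph_def)
  interpret neumann_domain_piece G f k p0
    using assms(1-3) p0 by unfold_locales
  show ?thesis using neumann_domain_properties unfolding \<Omega> .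
qed

end
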